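(* Let $g\ge1$ and let $\mathcal M_{2g+1}$, $V^{(2g+1)}$, $\mathcal M_A$, $H_i$ and $\widetilde{\mathcal S}$ be as in the context. Then $V^{(2g+1)}(h_1,\dots,h_{2g+1})\in\widetilde{\mathcal S}$ for every point $(h_1,\dots,h_{2g+1})\in\mathcal M_{2g+1}$. Moreover, the image $\widetilde{\mathcal Q}$ of the map $V^{(2g+1)}:\mathcal M_{2g+1}\to\widetilde{\mathcal S}$ is transversal to the distribution $E$ on $\widetilde{\mathcal S}$ spanned by the vector field $\dot X(\lambda)=[A,X(\lambda)]$.
   Context: Given a formal Laurent series $h=z+\sum_{l\ge1}h_lz^{-l}$, put $\lambda=z^2$ and define $H^{(0)}=1$, $H^{(1)}=h$, $H^{(2)}=z^2$, $H^{(k+2)}=z^2H^{(k)}-H^k_1h-H^k_2$ ($k\ge1$), where $H^k_l$ is the coefficient of $z^{-l}$ in $H^{(k)}$ (so $H^{(k)}=z^k+\sum_{l\ge1}H^k_lz^{-l}$, $H^1_l=h_l$). Each $H^{(k)}$ and each series $H^{(j+1)}+\sum_{l=1}^jh_lH^{(j-l)}+H^j_1$ can be written uniquely as $a(\lambda)+b(\lambda)h$ with $a,b$ polynomials. $V^{(j)}$ is the $2\times2$ polynomial matrix with first row $(p_j,q_j)$ where $H^{(j)}=p_j+q_jh$, and second row $(a_j,b_j)$ where $H^{(j+1)}+\sum_{l=1}^jh_lH^{(j-l)}+H^j_1=a_j+b_jh$. The $j$-th flow of the $\mathrm{CS}_2$ hierarchy is $\partial h/\partial t_j=-hH^{(j)}+H^{(j+1)}+\sum_{l=1}^jh_lH^{(j-l)}+H^j_1$.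 The phase space $\mathcal M_{2g+1}$ of the $\mathrm{KdV}_{2g+1}$ system is the set of $h$ such that $\partial h/\partial t_{2g+1}=0$ (as a Laurent series); on it all $h_l$ are determined by $(h_1,\dots,h_{2g+1})$, which serve as coordinates, and $V^{(2g+1)}$ is a function of these. $\mathcal M_A=\{X(\lambda)=\lambda^{g+1}A+\sum_{i=0}^g\lambda^iX_i\mid X_i\in\mathfrak{sl}(2)\}$ with $A=\begin{pmatrix}0&0\\1&0\end{pmatrix}$; $H_i$ is the coefficient of $\lambda^i$ in $\tfrac12\mathrm{Tr}\,X(\lambda)^2$; $\widetilde{\mathcal S}\subset\mathcal M_A$ is the submanifold defined by $H_{2g+1}=1$ and $H_i=0$ for $g+1\le i\le 2g$ (a symplectic leaf of the Poisson tensor $P_0$ on $\mathcal M_A$). The vector field $[A,X(\lambda)]$ is tangent to $\widetilde{\mathcal S}$. Transversality means that at each point of $\widetilde{\mathcal Q}$ the tangent space of $\widetilde{\mathcal S}$ is the direct sum of the tangent space of $\widetilde{\mathcal Q}$ and the line of $E$. *)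

theory Defs
  imports "HOL-Analysis.Analysis" "HOL-Computational_Algebra.Polynomial"
    "HOL-Computational_Algebra.Formal_Laurent_Series"
begin

text \<open>Laurent series in z with finitely many positive powers of z are represented as
  formal Laurent series in w = z^{-1}: the coefficient of z^{-l} of F is fls_nth F l,
  and z itself is fls_X_inv.\<close>

abbreviation zz :: "complex fls" where "zz \<equiv> fls_X_inv"

text \<open>h has the shape z + sum over l \<ge> 1 of h_l z^{-l}.\<close>
definition h_shape :: "complex fls \<Rightarrow> bool" where
  "h_shape h \<longleftrightarrow> fls_nth h (-1) = 1 \<and> fls_nth h 0 = 0 \<and> (\<forall>n. n \<le> -2 \<longrightarrow> fls_nth h n = 0)"

fun Hs :: "complex fls \<Rightarrow> nat \<Rightarrow> complex fls" where
  "Hs h 0 = 1"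
| "Hs h (Suc 0) = h"
| "Hs h (Suc (Suc 0)) = zz ^ 2"
| "Hs h (Suc (Suc (Suc k))) =
     zz ^ 2 * Hs h (Suc k) - fls_const (fls_nth (Hs h (Suc k)) 1) * h - fls_const (fls_nth (Hs h (Suc k)) 2)"

definition Ss :: "complex fls \<Rightarrow> nat \<Rightarrow> complex fls" where
  "Ss h j = Hs h (j + 1) + (\<Sum>l\<in>{1..j}. fls_const (fls_nth h (int l)) * Hs h (j - l))
            + fls_const (fls_nth (Hs h j) 1)"

definition flow :: "complex fls \<Rightarrow> nat \<Rightarrow> complex fls" where
  "flow h j = - h * Hs h j + Ss h j"

definition Mkdv :: "nat \<Rightarrow> complex fls set" where
  "Mkdv g = {h. h_shape h \<and> flow h (2*g+1) = 0}"

definition lam :: "complex poly \<Rightarrow> complex fls" where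
  "lam a = poly (map_poly fls_const a) (zz ^ 2)"

definition decomp :: "complex fls \<Rightarrow> complex fls \<Rightarrow> complex poly \<times> complex poly" where
  "decomp h F = (THE ab. F = lam (fst ab) + lam (snd ab) * h)"

definition mat2 :: "'a::zero \<Rightarrow> 'a \<Rightarrow> 'a \<Rightarrow> 'a \<Rightarrow> 'a^2^2" where
  "mat2 a b c d = (\<chi> r s. if r = 1 then (if s = 1 then a else b) else (if s = 1 then c else d))"

text \<open>A polynomial 2x2 matrix is represented by its coefficient sequence:
  X i is the (2x2 complex) coefficient of lambda^i.\<close>
type_synonym pmat = "nat \<Rightarrow> complex^2^2"

definition Vmat :: "nat \<Rightarrow> complex fls \<Rightarrow> pmat" where
  "Vmat j h = (let pq = decomp h (Hs h j); ab = decomp h (Ss h j) in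
     (\<lambda>i. mat2 (coeff (fst pq) i) (coeff (snd pq) i) (coeff (fst ab) i) (coeff (snd ab) i)))"

definition Vcoord :: "nat \<Rightarrow> (nat \<Rightarrow> complex) \<Rightarrow> pmat" where
  "Vcoord g c = Vmat (2*g+1) (THE h. h \<in> Mkdv g \<and> (\<forall>l\<in>{1..2*g+1}. fls_nth h (int l) = c l))"

definition Amat :: "complex^2^2" where "Amat = mat2 0 0 1 0"

definition msc :: "complex \<Rightarrow> complex^2^2 \<Rightarrow> complex^2^2" where
  "msc t M = (\<chi> r s. t * M $ r $ s)"

definition MA :: "nat \<Rightarrow> pmat set" where
  "MA g = {X. X (g+1) = Amat \<and> (\<forall>i\<le>g. trace (X i) = 0) \<and> (\<forall>i>g+1. X i = 0)}"

definition Hc :: "pmat \<Rightarrow> nat \<Rightarrow> complex" where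
  "Hc X i = (1/2) * trace (\<Sum>a\<le>i. X a ** X (i - a))"

definition Stilde :: "nat \<Rightarrow> pmat set" where
  "Stilde g = {X \<in> MA g. Hc X (2*g+1) = 1 \<and> (\<forall>i\<in>{g+1..2*g}. Hc X i = 0)}"

text \<open>Tangent space of S~ at X: tangent vectors Y of the affine space M_A
  (sum_{i \<le> g} lambda^i Y_i, Y_i in sl(2)) annihilated by the differentials of the
  defining functions H_i, g+1 \<le> i \<le> 2g+1.\<close>
definition TStilde :: "nat \<Rightarrow> pmat \<Rightarrow> pmat set" where
  "TStilde g X = {Y. (\<forall>i>g. Y i = 0) \<and> (\<forall>i. trace (Y i) = 0) \<and>
     (\<forall>i\<in>{g+1..2*g+1}. ((\<lambda>t. Hc (\<lambda>m. X m + msc t (Y m)) i) has_field_derivative 0) (at 0))}"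

definition Efield :: "pmat \<Rightarrow> pmat" where
  "Efield X = (\<lambda>i. Amat ** X i - X i ** Amat)"

end

(*
  Write H(2g+1) = p(\<lambda>) + q(\<lambda>) h and S(2g+1) = a(\<lambda>) + b(\<lambda>) h. Comparing the coefficients of
  z^0, z^1, ... expresses p, q, a, b by triangular recursions in h_1, ..., h_(2g+1). Conversely every
  value of these coordinates is attained by exactly one point of M(2g+1): it is the root
  h = (s - p(\<lambda>)) / q(\<lambda>) of q h^2 + 2 p h - a = 0, where s = z^(2g+1) + O(z^-1) is the square root
  of p^2 + q a = \<lambda>^(2g+1) + O(\<lambda>^g). Hence V(2g+1) = ((p, q), (a, -p)) is an explicit polynomial map
  of the coordinates, and (1/2) tr V(\<lambda>)^2 = p^2 + q a places its image in S~.

  For transversality, the (1,1) and (2,1) entries of Y_0, ..., Y_g are coordinates on the tangent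
  space of S~, the (1,2) entries being determined through the linearised constraints dH_i = 0 because
  the top coefficient of X is A. In these coordinates the partial derivatives dV/dh_r are lower
  triangular with nonzero diagonal (h_r enters the r-th free entry affinely and the earlier ones not
  at all), and E = [A, X] is the only one of these vectors with a nonzero (1,1) entry at \<lambda>^g.
*)

theory Submission
  imports Defs
begin

section \<open>Polynomials in \<lambda> = z^2 and the module \<open>C[\<lambda>] + C[\<lambda>] h\<close>\<close>

lemma lam_0 [simp]: "lam 0 = 0"
  by (simp add: lam_def)

lemma lam_1: "lam 1 = 1"
  by (simp add: lam_def map_poly_1)

lemma lam_pCons: "lam (pCons a p) = fls_const a + zz^2 * lam p"
  by (simp add: lam_def map_poly_pCons)

lemma lam_const: "lam [:a:] = fls_const a"
  by (simp add: lam_pCons)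

lemma lam_add: "lam (p + q) = lam p + lam q"
proof (induction p arbitrary: q rule: pCons_induct)
  case (pCons a p)
  obtain b q' where "q = pCons b q'"
    by (cases q rule: pCons_cases)
  then show ?case
    using pCons.IH[of q'] by (simp add: lam_pCons algebra_simps fls_plus_const[symmetric])
qed simp

lemma lam_uminus: "lam (- p) = - lam p"
  by (induction p rule: pCons_induct) (simp_all add: lam_pCons algebra_simps)

lemma lam_diff: "lam (p - q) = lam p - lam q"
  using lam_add[of p "- q"] by (simp add: lam_uminus)

lemma lam_smult: "lam (smult c p) = fls_const c * lam p"
  by (induction p rule: pCons_induct) (simp_all add: lam_pCons algebra_simps)

lemma lam_mult: "lam (p * q) = lam p * lam q"
  by (induction p rule: pCons_induct) (simp_all add: lam_pCons algebra_simps lam_add lam_smult)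

lemma lam_nth:
  "fls_nth (lam a) n = (if n \<le> 0 \<and> even n then coeff a (nat (- n) div 2) else 0)"
proof (induction a arbitrary: n rule: pCons_induct)
  case (pCons a p)
  have shift: "fls_nth (zz^2 * lam p) n = fls_nth (lam p) (n + 2)"
    by (simp add: fls_X_inv_power_times_conv_shift)
  show ?case
  proof (cases "n \<le> -2 \<and> even n")
    case True
    then have "nat (- n) = Suc (Suc (nat (- (n + 2))))"
      by linarith
    with True show ?thesis
      by (simp add: lam_pCons shift pCons.IH)
  next
    case False
    then have "n = 0 \<or> \<not> (n \<le> 0 \<and> even n)"
      by (cases "n = -1") auto
    then show ?thesis
      by (auto simp: lam_pCons shift pCons.IH)
  qed
qed simp

lemma lam_nth_even: "fls_nth (lam a) (- (2 * int m)) = coeff a m"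
  by (simp add: lam_nth nat_mult_distrib)

lemma lam_nth_odd: "odd n \<Longrightarrow> fls_nth (lam a) n = 0"
  by (simp add: lam_nth)

lemma lam_nth_pos: "n > 0 \<Longrightarrow> fls_nth (lam a) n = 0"
  by (simp add: lam_nth)

lemma lam_nth_eq_0I:
  assumes "\<And>i. n = - (2 * int i) \<Longrightarrow> coeff a i = 0"
  shows "fls_nth (lam a) n = 0"
proof (cases "n \<le> 0 \<and> even n")
  case True
  then have "n = - (2 * int (nat (- n) div 2))"
    by (auto elim!: evenE)
  then show ?thesis
    using assms lam_nth_even by metis
qed (auto simp: lam_nth)

lemma lam_eq_sum:
  assumes "degree b \<le> N"
  shows "lam b = (\<Sum>k\<le>N. fls_const (coeff b k) * zz ^ (2*k))"
proof -
  have "lam b = (\<Sum>k\<le>degree b. fls_const (coeff b k) * zz ^ (2*k))"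
    unfolding lam_def poly_altdef by (simp add: degree_map_poly coeff_map_poly power_mult)
  also have "\<dots> = (\<Sum>k\<le>N. fls_const (coeff b k) * zz ^ (2*k))"
    by (rule sum.mono_neutral_left) (use assms in \<open>auto simp: coeff_eq_0\<close>)
  finally show ?thesis .
qed

lemma lam_mult_nth:
  assumes "degree b \<le> N"
  shows "fls_nth (lam b * F) n = (\<Sum>k\<le>N. coeff b k * fls_nth F (n + 2 * int k))"
proof -
  have "lam b * F = (\<Sum>k\<le>N. fls_const (coeff b k) * (zz ^ (2*k) * F))"
    by (simp add: lam_eq_sum[OF assms] sum_distrib_right mult.assoc)
  then show ?thesis
    by (simp add: fls_nth_sum fls_X_inv_power_times_conv_shift)
qed

definition lam_module :: "complex fls \<Rightarrow> complex fls set" where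
  "lam_module h = {lam a + lam b * h | a b. True}"

lemma lam_moduleI: "F = lam a + lam b * h \<Longrightarrow> F \<in> lam_module h"
  unfolding lam_module_def by blast

lemma lam_moduleE:
  assumes "F \<in> lam_module h"
  obtains a b where "F = lam a + lam b * h"
  using assms unfolding lam_module_def by blast

lemma h_shape_nth:
  "h_shape h \<Longrightarrow> n \<le> 0 \<Longrightarrow> fls_nth h n = (if n = -1 then 1 else 0)"
  unfolding h_shape_def by (cases "n = -1"; cases "n = 0") auto

lemma lam_mult_h_nth_odd:
  assumes h: "h_shape h" and "degree b \<le> N" "m \<le> N"
  shows "fls_nth (lam b * h) (- (2 * int m + 1)) =
     coeff b m + (\<Sum>k\<in>{m+1..N}. coeff b k * fls_nth h (int (2 * (k - m) - 1)))"
proof -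
  let ?f = "\<lambda>k. coeff b k * fls_nth h (- (2 * int m + 1) + 2 * int k)"
  have "fls_nth (lam b * h) (- (2 * int m + 1)) = (\<Sum>k\<le>N. ?f k)"
    by (rule lam_mult_nth) fact
  also have "\<dots> = (\<Sum>k\<in>insert m {m+1..N}. ?f k)"
    by (rule sum.mono_neutral_right) (use assms in \<open>auto simp: h_shape_nth\<close>)
  also have "\<dots> = ?f m + (\<Sum>k\<in>{m+1..N}. coeff b k * fls_nth h (int (2 * (k - m) - 1)))"
    by (auto intro!: sum.cong simp: of_nat_diff algebra_simps)
  finally show ?thesis
    using h_shape_nth[OF h, of "-1"] by simp
qed

lemma lam_mult_h_nth_even:
  assumes h: "h_shape h" and "degree b \<le> N"
  shows "fls_nth (lam b * h) (- (2 * int m)) =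
     (\<Sum>k\<in>{m+1..N}. coeff b k * fls_nth h (int (2 * (k - m))))"
proof -
  let ?f = "\<lambda>k. coeff b k * fls_nth h (- (2 * int m) + 2 * int k)"
  have "fls_nth (lam b * h) (- (2 * int m)) = (\<Sum>k\<le>N. ?f k)"
    by (rule lam_mult_nth) fact
  also have "\<dots> = (\<Sum>k\<in>{m+1..N}. ?f k)"
  proof (rule sum.mono_neutral_right)
    show "\<forall>i\<in>{..N} - {m+1..N}. ?f i = 0"
      using h_shape_nth[OF h] by (auto simp: not_less_eq_eq) presburger
  qed auto
  also have "\<dots> = (\<Sum>k\<in>{m+1..N}. coeff b k * fls_nth h (int (2 * (k - m))))"
    by (rule sum.cong) (auto simp: of_nat_diff algebra_simps)
  finally show ?thesis .
qed

text \<open>With \<open>d = deg b\<close>, the coefficient of \<open>z^(2d+1)\<close> is the leading coefficient of \<open>b\<close>;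
  once \<open>b = 0\<close>, the coefficient of \<open>z^(2m)\<close> is that of \<open>\<lambda>^m\<close> in \<open>a\<close>.\<close>
lemma lam_module_unique:
  assumes h: "h_shape h" and zero: "\<forall>n\<le>0. fls_nth (lam a + lam b * h) n = 0"
  shows "a = 0 \<and> b = 0"
proof -
  have b: "b = 0"
  proof (rule ccontr)
    assume "b \<noteq> 0"
    have "fls_nth (lam a + lam b * h) (- (2 * int (degree b) + 1)) = lead_coeff b"
      using lam_mult_h_nth_odd[OF h order.refl order.refl] by (simp add: lam_nth_odd)
    moreover have "fls_nth (lam a + lam b * h) (- (2 * int (degree b) + 1)) = 0"
      using zero by simp
    ultimately show False
      using \<open>b \<noteq> 0\<close> by simp
  qed
  have "coeff a m = 0" for m
    using zero[rule_format, of "- (2 * int m)"] b by (simp add: lam_nth_even)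
  with b show ?thesis
    by (simp add: poly_eqI)
qed

lemma lam_module_eqI:
  assumes "h_shape h" "F \<in> lam_module h" "G \<in> lam_module h"
    and "\<forall>n\<le>0. fls_nth F n = fls_nth G n"
  shows "F = G"
proof -
  obtain a b a' b' where F: "F = lam a + lam b * h" and G: "G = lam a' + lam b' * h"
    using assms(2,3) by (metis lam_moduleE)
  have "F - G = lam (a - a') + lam (b - b') * h"
    by (simp add: F G lam_diff algebra_simps)
  then have "a - a' = 0 \<and> b - b' = 0"
    using lam_module_unique[OF assms(1)] assms(4) by (metis fls_minus_nth right_minus_eq)
  then show ?thesis
    using F G by simp
qed

lemma decomp_eq:
  assumes h: "h_shape h" and F: "F = lam a + lam b * h"
  shows "decomp h F = (a, b)"
  unfolding decomp_def
proof (rule the_equality)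
  fix ab assume "F = lam (fst ab) + lam (snd ab) * h"
  then have "lam (fst ab - a) + lam (snd ab - b) * h = 0"
    using F by (simp add: lam_diff algebra_simps)
  then have "fst ab - a = 0 \<and> snd ab - b = 0"
    using lam_module_unique[OF h, of "fst ab - a" "snd ab - b"] by simp
  then show "ab = (a, b)"
    by (simp add: prod_eq_iff)
qed (simp add: F)

lemma lam_module_add:
  assumes "F \<in> lam_module h" "G \<in> lam_module h"
  shows "F + G \<in> lam_module h"
proof -
  obtain a b a' b' where "F = lam a + lam b * h" "G = lam a' + lam b' * h"
    using assms by (metis lam_moduleE)
  then show ?thesis
    by (intro lam_moduleI[of _ "a + a'" "b + b'"]) (simp add: lam_add algebra_simps)
qed

lemma lam_module_diff:
  assumes "F \<in> lam_module h" "G \<in> lam_module h"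
  shows "F - G \<in> lam_module h"
proof -
  obtain a b a' b' where "F = lam a + lam b * h" "G = lam a' + lam b' * h"
    using assms by (metis lam_moduleE)
  then show ?thesis
    by (intro lam_moduleI[of _ "a - a'" "b - b'"]) (simp add: lam_diff algebra_simps)
qed

lemma lam_module_const_mult:
  assumes "F \<in> lam_module h"
  shows "fls_const c * F \<in> lam_module h"
proof -
  obtain a b where "F = lam a + lam b * h"
    using assms by (rule lam_moduleE)
  then show ?thesis
    by (intro lam_moduleI[of _ "smult c a" "smult c b"]) (simp add: lam_smult algebra_simps)
qed

lemma lam_module_zz2_mult:
  assumes "F \<in> lam_module h"
  shows "zz^2 * F \<in> lam_module h"
proof -
  obtain a b where "F = lam a + lam b * h"
    using assms by (rule lam_moduleE)
  then show ?thesis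
    by (intro lam_moduleI[of _ "pCons 0 a" "pCons 0 b"]) (simp add: lam_pCons algebra_simps)
qed

lemma lam_module_const: "fls_const c \<in> lam_module h"
  by (rule lam_moduleI[of _ "[:c:]" 0]) (simp add: lam_const)

lemma lam_module_self: "h \<in> lam_module h"
  by (rule lam_moduleI[of _ 0 1]) (simp add: lam_1)

lemma lam_module_sum:
  "(\<And>x. x \<in> A \<Longrightarrow> f x \<in> lam_module h) \<Longrightarrow> (\<Sum>x\<in>A. f x) \<in> lam_module h"
  by (induction A rule: infinite_finite_induct)
    (use lam_module_const[of 0] in \<open>auto intro: lam_module_add\<close>)

section \<open>The series \<open>H(k)\<close> and \<open>S(j)\<close>\<close>

definition zpow_shape :: "complex fls \<Rightarrow> nat \<Rightarrow> bool" where
  "zpow_shape F k \<longleftrightarrow> (\<forall>n\<le>0. fls_nth F n = (if n = - int k then 1 else 0))"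

lemma Hs_in_lam_module: "Hs h k \<in> lam_module h"
proof (induction h k rule: Hs.induct)
  case (1 h)
  show ?case
    using lam_module_const[of 1] by simp
next
  case (3 h)
  show ?case
    using lam_module_zz2_mult[OF lam_module_const[of 1]] by simp
qed (auto intro!: lam_module_diff lam_module_zz2_mult lam_module_const_mult lam_module_const
    lam_module_self)

lemma zpow_shape_Hs: "h_shape h \<Longrightarrow> zpow_shape (Hs h k) k"
proof (induction h k rule: Hs.induct)
  case (4 h k)
  show ?case
    unfolding zpow_shape_def
  proof (intro allI impI)
    fix n :: int assume n: "n \<le> 0"
    have IH: "zpow_shape (Hs h (Suc k)) (Suc k)"
      using "4" by blast
    consider "n \<le> -2" | "n = -1" | "n = 0"
      using n by linarith
    then show "fls_nth (Hs h (Suc (Suc (Suc k)))) n = (if n = - int (Suc (Suc (Suc k))) then 1 else 0)"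
      by cases (use IH "4.prems" in \<open>simp_all add: fls_X_inv_power_times_conv_shift zpow_shape_def h_shape_nth\<close>)
  qed
qed (auto simp: zpow_shape_def h_shape_nth)

text \<open>The coefficient of \<open>z^-n\<close>, \<open>n \<le> 0\<close>, in \<open>h F\<close> for \<open>F = z^j + c z^-1 + O(z^-2)\<close>.
  The series \<open>S(j) = H(j+1) + \<Sum>l h_l H(j-l) + H(j)_1\<close> has the same coefficients there
  (with \<open>F = H(j)\<close>), so the flow \<open>S(j) - h H(j)\<close> only has negative powers of \<open>z\<close>.\<close>
definition hmul_top :: "complex fls \<Rightarrow> nat \<Rightarrow> complex \<Rightarrow> int \<Rightarrow> complex" where
  "hmul_top h j c n = (if n = - (int j + 1) then 1 else 0)
     + (if 1 - int j \<le> n then fls_nth h (int j + n) else 0) + (if n = 0 then c else 0)"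

lemma sum_delta_shift:
  fixes f :: "nat \<Rightarrow> 'a::semiring_1"
  assumes "n \<le> 0"
  shows "(\<Sum>l\<in>{1..j}. f l * (if n = - int (j - l) then 1 else 0)) =
    (if 1 - int j \<le> n then f (nat (int j + n)) else 0)"
proof -
  have "(\<Sum>l\<in>{1..j}. f l * (if n = - int (j - l) then 1 else 0)) =
      (\<Sum>l\<in>{1..j}. if l = nat (int j + n) then f l else 0)"
    by (rule sum.cong) (use assms in auto)
  also have "\<dots> = (if 1 - int j \<le> n then f (nat (int j + n)) else 0)"
    using assms by (auto simp: sum.delta')
  finally show ?thesis .
qed

lemma Ss_in_lam_module: "Ss h j \<in> lam_module h"
  unfolding Ss_def
  by (intro lam_module_add lam_module_sum lam_module_const_mult lam_module_const Hs_in_lam_module)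

lemma Ss_nth_nonpos:
  assumes h: "h_shape h" and n: "n \<le> 0"
  shows "fls_nth (Ss h j) n = hmul_top h j (fls_nth (Hs h j) 1) n"
proof -
  have H: "fls_nth (Hs h k) n = (if n = - int k then 1 else 0)" for k
    using zpow_shape_Hs[OF h, of k] n unfolding zpow_shape_def by auto
  have "fls_nth (Ss h j) n = fls_nth (Hs h (j + 1)) n
      + (\<Sum>l\<in>{1..j}. fls_nth h (int l) * fls_nth (Hs h (j - l)) n)
      + (if n = 0 then fls_nth (Hs h j) 1 else 0)"
    unfolding Ss_def by (simp add: fls_nth_sum)
  also have "\<dots> = hmul_top h j (fls_nth (Hs h j) 1) n"
    unfolding H hmul_top_def sum_delta_shift[OF n] using n by (simp add: algebra_simps)
  finally show ?thesis .
qed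

lemma hmul_nth_nonpos:
  assumes h: "h_shape h" and F: "zpow_shape F j" and n: "n \<le> 0"
  shows "fls_nth (h * F) n = hmul_top h j (fls_nth F 1) n"
proof -
  define T where "T = h - zz"
  define G where "G = F - zz^j"
  have T0: "fls_nth T m = 0" if "m \<le> 0" for m
    using h_shape_nth[OF h that] that by (auto simp: T_def)
  have G0: "fls_nth G m = 0" if "m \<le> 0" for m
    using F that unfolding zpow_shape_def G_def by auto
  have TG: "fls_nth (T * G) n = 0"
  proof (cases "T = 0 \<or> G = 0")
    case False
    then have "fls_subdegree T \<ge> 1" "fls_subdegree G \<ge> 1"
      using T0 G0 by (auto intro!: fls_subdegree_geI)
    then show ?thesis
      using n by (intro fls_times_nth_eq0) simp
  qed auto
  have zpow: "fls_nth (zz * zz^j) n = (if n = - (int j + 1) then 1 else 0)"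
    by (simp add: fls_X_inv_times_conv_shift fls_X_inv_power_nth)
  have "h * F = zz^(j+1) + zz * G + zz^j * T + T * G"
    by (simp add: T_def G_def algebra_simps)
  then have "fls_nth (h * F) n =
      fls_nth (zz^(j+1)) n + fls_nth G (n + 1) + fls_nth T (n + int j) + fls_nth (T * G) n"
    by (simp add: fls_X_inv_times_conv_shift fls_X_inv_power_times_conv_shift)
  also have "fls_nth G (n + 1) = (if n = 0 then fls_nth F 1 else 0)"
    using G0[of "n + 1"] n by (auto simp: G_def)
  also have "fls_nth T (n + int j) = (if 1 - int j \<le> n then fls_nth h (int j + n) else 0)"
    using T0[of "n + int j"] by (auto simp: T_def algebra_simps)
  finally show ?thesis
    unfolding hmul_top_def TG by (simp add: zpow algebra_simps)
qed

lemma flow_eq_0I: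
  assumes h: "h_shape h" and "h * Hs h j \<in> lam_module h"
  shows "flow h j = 0"
proof -
  have "Ss h j = h * Hs h j"
    by (rule lam_module_eqI[OF h Ss_in_lam_module assms(2)])
      (simp add: Ss_nth_nonpos[OF h] hmul_nth_nonpos[OF h zpow_shape_Hs[OF h]])
  then show ?thesis
    by (simp add: flow_def)
qed

section \<open>\<open>V(2g+1)\<close> in terms of the coordinates \<open>h_1, ..., h_(2g+1)\<close>\<close>

function back_subst :: "nat \<Rightarrow> (nat \<Rightarrow> 'a::comm_ring_1) \<Rightarrow> (nat \<Rightarrow> 'a) \<Rightarrow> nat \<Rightarrow> 'a" where
  "back_subst d r w m =
     (if d < m then 0 else r m - (\<Sum>k\<in>{m+1..d}. back_subst d r w k * w (k - m)))"
  by pat_completeness auto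
termination
  by (relation "Wellfounded.measure (\<lambda>(d, r, w, m). d - m)") auto

declare back_subst.simps [simp del]

lemma back_subst_gt: "d < m \<Longrightarrow> back_subst d r w m = 0"
  by (subst back_subst.simps) simp

lemma back_subst_le:
  "m \<le> d \<Longrightarrow> back_subst d r w m = r m - (\<Sum>k\<in>{m+1..d}. back_subst d r w k * w (k - m))"
  by (subst back_subst.simps) simp

lemma back_subst_cong:
  assumes "\<And>k. m \<le> k \<Longrightarrow> k \<le> d \<Longrightarrow> r k = r' k"
    and "\<And>i. 1 \<le> i \<Longrightarrow> i \<le> d - m \<Longrightarrow> w i = w' i"
  shows "back_subst d r w m = back_subst d r' w' m"
  using assms
proof (induction "d - m" arbitrary: m rule: less_induct)
  case less
  show ?case
  proof (cases "m \<le> d")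
    case True
    have "back_subst d r w k = back_subst d r' w' k" if "k \<in> {m+1..d}" for k
      using that by (intro less) (auto intro!: less.prems)
    moreover have "w (k - m) = w' (k - m)" if "k \<in> {m+1..d}" for k
      using that by (intro less.prems) auto
    ultimately have "(\<Sum>k\<in>{m+1..d}. back_subst d r w k * w (k - m)) =
        (\<Sum>k\<in>{m+1..d}. back_subst d r' w' k * w' (k - m))"
      by (intro sum.cong) auto
    then show ?thesis
      using True less.prems(1)[of m] by (simp only: back_subst_le[OF True])

  qed (simp add: back_subst_gt)
qed

lemma coeff_eq_back_subst:
  fixes q :: "'a::comm_ring_1 poly"
  assumes eq: "\<And>m N. degree q \<le> N \<Longrightarrow> m \<le> N \<Longrightarrow>
      coeff q m + (\<Sum>k\<in>{m+1..N}. coeff q k * w (k - m)) = r m"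
    and r: "\<And>m. d < m \<Longrightarrow> r m = 0"
  shows "coeff q m = back_subst d r w m"
proof -
  have deg: "degree q \<le> d"
  proof (rule ccontr)
    assume "\<not> degree q \<le> d"
    then have "lead_coeff q = 0"
      using eq[of "degree q" "degree q"] r[of "degree q"] by simp
    with \<open>\<not> degree q \<le> d\<close> show False
      by simp
  qed
  show ?thesis
  proof (cases "d < m")
    case False
    then show ?thesis
    proof (induction "d - m" arbitrary: m rule: less_induct)
      case less
      have "(\<Sum>k\<in>{m+1..d}. coeff q k * w (k - m)) = (\<Sum>k\<in>{m+1..d}. back_subst d r w k * w (k - m))"
        by (rule sum.cong) (use less in auto)
      then show ?case
        using eq[OF deg, of m] less.prems by (simp add: back_subst_le eq_diff_eq)
    qed
  qed (use deg in \<open>simp add: back_subst_gt coeff_eq_0\<close>)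
qed

definition coords :: "complex fls \<Rightarrow> nat \<Rightarrow> complex" where
  "coords h = (\<lambda>l. fls_nth h (int l))"

text \<open>The entries of \<open>V(2g+1) = ((p, q), (a, b))\<close> as functions of the coordinates
  \<open>c l = h_l\<close>. They come from comparing the coefficients of \<open>z^(-2m-1)\<close> and \<open>z^(-2m)\<close>,
  \<open>m \<ge> 0\<close>, in \<open>H(2g+1) = p(\<lambda>) + q(\<lambda>) h\<close> and \<open>S(2g+1) = a(\<lambda>) + b(\<lambda>) h\<close>.\<close>
definition q_coeff :: "nat \<Rightarrow> (nat \<Rightarrow> complex) \<Rightarrow> nat \<Rightarrow> complex" where
  "q_coeff g c = back_subst g (\<lambda>m. if m = g then 1 else 0) (\<lambda>i. c (2 * i - 1))"

definition p_coeff :: "nat \<Rightarrow> (nat \<Rightarrow> complex) \<Rightarrow> nat \<Rightarrow> complex" where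
  "p_coeff g c m = - (\<Sum>k\<in>{m+1..g}. q_coeff g c k * c (2 * (k - m)))"

definition b_coeff :: "nat \<Rightarrow> (nat \<Rightarrow> complex) \<Rightarrow> nat \<Rightarrow> complex" where
  "b_coeff g c = back_subst g (\<lambda>m. if m < g then c (2 * g - 2 * m) else 0) (\<lambda>i. c (2 * i - 1))"

definition H1_coeff :: "nat \<Rightarrow> (nat \<Rightarrow> complex) \<Rightarrow> complex" where
  "H1_coeff g c = (\<Sum>k\<le>g. q_coeff g c k * c (2 * k + 1))"

definition a_coeff :: "nat \<Rightarrow> (nat \<Rightarrow> complex) \<Rightarrow> nat \<Rightarrow> complex" where
  "a_coeff g c m = (if m = g + 1 then 1 else 0) + (if m \<le> g then c (2 * g + 1 - 2 * m) else 0)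
     + (if m = 0 then H1_coeff g c else 0) - (\<Sum>k\<in>{m+1..g}. b_coeff g c k * c (2 * (k - m)))"

definition V_of_coords :: "nat \<Rightarrow> (nat \<Rightarrow> complex) \<Rightarrow> pmat" where
  "V_of_coords g c = (\<lambda>i. mat2 (p_coeff g c i) (q_coeff g c i) (a_coeff g c i) (b_coeff g c i))"

lemma q_coeff_gt: "g < m \<Longrightarrow> q_coeff g c m = 0"
  by (simp add: q_coeff_def back_subst_gt)

lemma q_coeff_top: "q_coeff g c g = 1"
  by (simp add: q_coeff_def back_subst_le)

lemma q_coeff_less:
  "m < g \<Longrightarrow> q_coeff g c m = - c (2 * (g - m) - 1) - (\<Sum>k\<in>{m+1..<g}. q_coeff g c k * c (2 * (k - m) - 1))"
proof -
  assume m: "m < g"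
  then have "{m+1..g} = insert g {m+1..<g}"
    by auto
  moreover have "q_coeff g c m = - (\<Sum>k\<in>{m+1..g}. q_coeff g c k * c (2 * (k - m) - 1))"
    using m unfolding q_coeff_def by (subst back_subst_le) simp_all
  ultimately show ?thesis
    using m by (simp add: q_coeff_top)
qed

lemma p_coeff_ge: "g \<le> m \<Longrightarrow> p_coeff g c m = 0"
  by (simp add: p_coeff_def)

lemma p_coeff_less:
  "m < g \<Longrightarrow> p_coeff g c m = - c (2 * (g - m)) - (\<Sum>k\<in>{m+1..<g}. q_coeff g c k * c (2 * (k - m)))"
proof -
  assume m: "m < g"
  then have "{m+1..g} = insert g {m+1..<g}"
    by auto
  with m show ?thesis
    by (simp add: p_coeff_def q_coeff_top)
qed

lemma b_coeff_ge: "g \<le> m \<Longrightarrow> b_coeff g c m = 0"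
  by (cases "g = m") (simp_all add: b_coeff_def back_subst_le back_subst_gt)

lemma H1_coeff_eq: "H1_coeff g c = c (2 * g + 1) + (\<Sum>k<g. q_coeff g c k * c (2 * k + 1))"
proof -
  have "{..g} = insert g {..<g}"
    by auto
  then show ?thesis
    by (simp add: H1_coeff_def q_coeff_top)
qed

lemma a_coeff_gt: "g + 1 < m \<Longrightarrow> a_coeff g c m = 0"
  by (simp add: a_coeff_def)

lemma a_coeff_top: "a_coeff g c (g + 1) = 1"
  by (simp add: a_coeff_def)

lemma zpow_shape_nth_odd:
  "zpow_shape F (2 * g + 1) \<Longrightarrow> fls_nth F (- (2 * int m + 1)) = (if m = g then 1 else 0)"
  unfolding zpow_shape_def by (drule spec[of _ "- (2 * int m + 1)"]) auto

lemma zpow_shape_nth_even: "zpow_shape F (2 * g + 1) \<Longrightarrow> fls_nth F (- (2 * int m)) = 0"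
proof -
  have "- (2 * int m) \<noteq> - int (2 * g + 1)"
    by presburger
  then show "zpow_shape F (2 * g + 1) \<Longrightarrow> ?thesis"
    unfolding zpow_shape_def by auto
qed

lemma hmul_top_odd:
  "hmul_top h (2 * g + 1) c (- (2 * int m + 1)) = (if m < g then coords h (2 * g - 2 * m) else 0)"
proof -
  have "- (2 * int m + 1) \<noteq> - (int (2 * g + 1) + 1)"
    by presburger
  moreover have "m < g \<Longrightarrow> int (2 * g + 1) + (- (2 * int m + 1)) = int (2 * g - 2 * m)"
    by auto
  ultimately show ?thesis
    unfolding hmul_top_def coords_def by auto
qed

lemma hmul_top_even:
  "hmul_top h (2 * g + 1) c (- (2 * int m)) = (if m = g + 1 then 1 else 0)
     + (if m \<le> g then coords h (2 * g + 1 - 2 * m) else 0) + (if m = 0 then c else 0)"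
proof -
  have "m \<le> g \<Longrightarrow> int (2 * g + 1) + (- (2 * int m)) = int (2 * g + 1 - 2 * m)"
    by auto
  then show ?thesis
    unfolding hmul_top_def coords_def by auto
qed

lemma lam_decomp_nth_odd:
  assumes "h_shape h" "degree b \<le> N" "m \<le> N"
  shows "fls_nth (lam a + lam b * h) (- (2 * int m + 1)) =
    coeff b m + (\<Sum>k\<in>{m+1..N}. coeff b k * coords h (2 * (k - m) - 1))"
  using lam_mult_h_nth_odd[OF assms] by (simp add: lam_nth_odd coords_def)

lemma lam_decomp_nth_even:
  assumes "h_shape h" "degree b \<le> N"
  shows "fls_nth (lam a + lam b * h) (- (2 * int m)) =
    coeff a m + (\<Sum>k\<in>{m+1..N}. coeff b k * coords h (2 * (k - m)))"
  using lam_mult_h_nth_even[OF assms] by (simp add: lam_nth_even coords_def)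

lemma Hs_decomp_coeffs:
  assumes h: "h_shape h" and H: "Hs h (2 * g + 1) = lam p + lam q * h"
  shows "coeff q m = q_coeff g (coords h) m" and "coeff p m = p_coeff g (coords h) m"
proof -
  have shape: "zpow_shape (lam p + lam q * h) (2 * g + 1)"
    using zpow_shape_Hs[OF h, of "2 * g + 1"] by (simp only: H)
  have q: "coeff q m = q_coeff g (coords h) m" for m
    unfolding q_coeff_def
  proof (rule coeff_eq_back_subst)
    fix m N assume "degree q \<le> N" "m \<le> N"
    from lam_decomp_nth_odd[OF h this, of p] zpow_shape_nth_odd[OF shape, of m]
    show "coeff q m + (\<Sum>k\<in>{m+1..N}. coeff q k * coords h (2 * (k - m) - 1)) = (if m = g then 1 else 0)"
      by simp
  qed simp
  then show "coeff q m = q_coeff g (coords h) m" .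
  have "degree q \<le> g"
    by (rule degree_le) (simp add: q q_coeff_gt)
  from lam_decomp_nth_even[OF h this, of p m] zpow_shape_nth_even[OF shape, of m]
  have "coeff p m + (\<Sum>k\<in>{m+1..g}. coeff q k * coords h (2 * (k - m))) = 0"
    by simp
  then show "coeff p m = p_coeff g (coords h) m"
    unfolding p_coeff_def q by (simp add: eq_neg_iff_add_eq_0)
qed

lemma Hs_nth_1:
  assumes h: "h_shape h" and H: "Hs h (2 * g + 1) = lam p + lam q * h"
  shows "fls_nth (Hs h (2 * g + 1)) 1 = H1_coeff g (coords h)"
proof -
  have "degree q \<le> g"
    by (rule degree_le) (simp add: Hs_decomp_coeffs[OF assms] q_coeff_gt)
  from lam_mult_nth[OF this, of h 1]
  have "fls_nth (lam p + lam q * h) 1 = H1_coeff g (coords h)"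
    by (simp add: H1_coeff_def Hs_decomp_coeffs[OF assms] lam_nth_pos coords_def algebra_simps)
  then show ?thesis
    by (simp only: H)
qed

lemma Ss_decomp_coeffs:
  assumes h: "h_shape h" and H: "Hs h (2 * g + 1) = lam p + lam q * h"
    and S: "Ss h (2 * g + 1) = lam a + lam b * h"
  shows "coeff b m = b_coeff g (coords h) m" and "coeff a m = a_coeff g (coords h) m"
proof -
  have S_nth: "fls_nth (lam a + lam b * h) n = hmul_top h (2 * g + 1) (H1_coeff g (coords h)) n"
    if "n \<le> 0" for n
    using Ss_nth_nonpos[OF h that, of "2 * g + 1"] by (simp only: Hs_nth_1[OF h H] S)
  have b: "coeff b m = b_coeff g (coords h) m" for m
    unfolding b_coeff_def
  proof (rule coeff_eq_back_subst)
    fix m N assume "degree b \<le> N" "m \<le> N"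
    from lam_decomp_nth_odd[OF h this, of a] S_nth[of "- (2 * int m + 1)", unfolded hmul_top_odd]
    show "coeff b m + (\<Sum>k\<in>{m+1..N}. coeff b k * coords h (2 * (k - m) - 1)) =
        (if m < g then coords h (2 * g - 2 * m) else 0)"
      by simp
  qed simp
  then show "coeff b m = b_coeff g (coords h) m" .
  have "degree b \<le> g"
    by (rule degree_le) (simp add: b b_coeff_ge)
  from lam_decomp_nth_even[OF h this, of a m] S_nth[of "- (2 * int m)", unfolded hmul_top_even]
  have "coeff a m + (\<Sum>k\<in>{m+1..g}. coeff b k * coords h (2 * (k - m))) =
      (if m = g + 1 then 1 else 0) + (if m \<le> g then coords h (2 * g + 1 - 2 * m) else 0)
      + (if m = 0 then H1_coeff g (coords h) else 0)"
    by simp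
  then show "coeff a m = a_coeff g (coords h) m"
    unfolding a_coeff_def b by (simp add: eq_diff_eq)
qed

lemma Vmat_eq_V_of_coords:
  assumes h: "h_shape h"
  shows "Vmat (2 * g + 1) h = V_of_coords g (coords h)"
proof -
  obtain p q where H: "Hs h (2 * g + 1) = lam p + lam q * h"
    using Hs_in_lam_module by (blast elim: lam_moduleE)
  obtain a b where S: "Ss h (2 * g + 1) = lam a + lam b * h"
    using Ss_in_lam_module by (blast elim: lam_moduleE)
  show ?thesis
    unfolding Vmat_def V_of_coords_def Let_def decomp_eq[OF h H] decomp_eq[OF h S]
    by (simp add: Hs_decomp_coeffs[OF h H] Ss_decomp_coeffs[OF h H S])
qed

definition agree_upto :: "nat \<Rightarrow> (nat \<Rightarrow> 'a) \<Rightarrow> (nat \<Rightarrow> 'a) \<Rightarrow> bool" where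
  "agree_upto r c c' \<longleftrightarrow> (\<forall>l. 1 \<le> l \<longrightarrow> l \<le> r \<longrightarrow> c l = c' l)"

lemma agree_upto_mono: "agree_upto r c c' \<Longrightarrow> r' \<le> r \<Longrightarrow> agree_upto r' c c'"
  unfolding agree_upto_def by auto

lemma agree_uptoD: "agree_upto r c c' \<Longrightarrow> 1 \<le> l \<Longrightarrow> l \<le> r \<Longrightarrow> c l = c' l"
  unfolding agree_upto_def by auto

lemma agree_upto_sym: "agree_upto r c c' \<Longrightarrow> agree_upto r c' c"
  unfolding agree_upto_def by auto

lemma agree_upto_fun_upd: "r < k \<Longrightarrow> agree_upto r (c(k := x)) c"
  unfolding agree_upto_def by auto

lemma q_coeff_agree: "agree_upto (2 * (g - m) - 1) c c' \<Longrightarrow> q_coeff g c m = q_coeff g c' m"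
  unfolding q_coeff_def by (rule back_subst_cong) (auto intro: agree_uptoD)

lemma b_coeff_agree: "agree_upto (2 * (g - m)) c c' \<Longrightarrow> b_coeff g c m = b_coeff g c' m"
  unfolding b_coeff_def by (rule back_subst_cong) (auto intro: agree_uptoD)

lemma p_coeff_agree: "agree_upto (2 * (g - m)) c c' \<Longrightarrow> p_coeff g c m = p_coeff g c' m"
  unfolding p_coeff_def
  by (intro arg_cong[where f = uminus] sum.cong refl arg_cong2[where f = times] q_coeff_agree)
    (auto elim: agree_upto_mono intro: agree_uptoD)

lemma H1_coeff_agree: "agree_upto (2 * g + 1) c c' \<Longrightarrow> H1_coeff g c = H1_coeff g c'"
  unfolding H1_coeff_def
  by (intro sum.cong refl arg_cong2[where f = times] q_coeff_agree)
    (auto elim: agree_upto_mono intro: agree_uptoD)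

lemma a_coeff_agree: "agree_upto (2 * g + 1 - 2 * m) c c' \<Longrightarrow> a_coeff g c m = a_coeff g c' m"
  unfolding a_coeff_def
  by (intro arg_cong2[where f = minus] arg_cong2[where f = plus] sum.cong refl
      arg_cong2[where f = times] b_coeff_agree if_cong H1_coeff_agree)
    (auto elim: agree_upto_mono intro: agree_uptoD)

lemma V_of_coords_agree: "agree_upto (2 * g + 1) c c' \<Longrightarrow> V_of_coords g c = V_of_coords g c'"
  unfolding V_of_coords_def
  by (intro ext arg_cong4[where f = mat2] p_coeff_agree q_coeff_agree a_coeff_agree b_coeff_agree)
    (auto elim: agree_upto_mono)

section \<open>Points of \<open>M(2g+1)\<close> with given coordinates\<close>

text \<open>Conversely \<open>q\<close> and \<open>p\<close> determine \<open>h_1, ..., h_2g\<close>: \<open>h_(2i+1)\<close> enters \<open>q_(g-i-1)\<close> and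
  \<open>h_(2i)\<close> enters \<open>p_(g-i)\<close> with coefficient \<open>-1\<close>, next to terms in lower coordinates only.\<close>
lemma agree_upto_of_pq_coeffs:
  assumes q: "\<And>m. q_coeff g c m = q_coeff g c' m" and p: "\<And>m. p_coeff g c m = p_coeff g c' m"
  shows "agree_upto (2 * g) c c'"
  unfolding agree_upto_def
proof (intro allI impI)
  fix l assume "1 \<le> l" "l \<le> 2 * g"
  then show "c l = c' l"
  proof (induction l rule: less_induct)
    case (less l)
    have IH: "c (2 * (k - m) - j) = c' (2 * (k - m) - j)"
      if "m < k" "k < g" "2 * (g - m) - j = l" "j \<le> 1" for k m j
      by (rule less.IH) (use that in auto)
    show ?case
    proof (cases "even l")
      case False
      define m where "m = g - (l + 1) div 2"
      have m: "m < g" "2 * (g - m) - 1 = l"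
        using less.prems False by (auto simp: m_def elim!: oddE)
      have "(\<Sum>k\<in>{m+1..<g}. q_coeff g c k * c (2 * (k - m) - 1)) =
          (\<Sum>k\<in>{m+1..<g}. q_coeff g c' k * c' (2 * (k - m) - 1))"
        by (intro sum.cong refl arg_cong2[where f = times] q IH[OF _ _ m(2)]) auto
      with q[of m] have "c (2 * (g - m) - 1) = c' (2 * (g - m) - 1)"
        by (simp add: q_coeff_less[OF m(1)])
      then show ?thesis
        by (simp only: m(2))
    next
      case True
      define m where "m = g - l div 2"
      have m: "m < g" "2 * (g - m) - 0 = l"
        using less.prems True by (auto simp: m_def elim!: evenE)
      have "(\<Sum>k\<in>{m+1..<g}. q_coeff g c k * c (2 * (k - m) - 0)) =
          (\<Sum>k\<in>{m+1..<g}. q_coeff g c' k * c' (2 * (k - m) - 0))"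
        by (intro sum.cong refl arg_cong2[where f = times] q IH[OF _ _ m(2)]) auto
      with p[of m] m show ?thesis
        by (simp add: p_coeff_less[OF m(1)])
    qed
  qed
qed

lemma fps_sqrt_gap:
  fixes A :: "'a::field_char_0 fps"
  assumes A0: "fps_nth A 0 = 1" and gap: "\<And>n. 0 < n \<Longrightarrow> n < K \<Longrightarrow> fps_nth A n = 0"
  shows "\<exists>r. r^2 = A \<and> fps_nth r 0 = 1 \<and> (\<forall>n. 0 < n \<longrightarrow> n < K \<longrightarrow> fps_nth r n = 0)"
proof -
  define r where "r = fps_radical (\<lambda>_ _. 1) 2 A"
  have r2: "r^2 = A"
    using power_radical[of A "\<lambda>_ _. 1" 1] A0 by (simp add: r_def numeral_2_eq_2)
  have r0: "fps_nth r 0 = 1"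
    by (simp add: r_def)
  have "fps_nth r n = 0" if "0 < n" "n < K" for n
    using that
  proof (induction n rule: less_induct)
    case (less n)
    have "fps_nth A n = fps_nth (r * r) n"
      by (simp add: r2 flip: power2_eq_square)
    also have "\<dots> = (\<Sum>i=0..n. fps_nth r i * fps_nth r (n - i))"
      by (rule fps_mult_nth)
    also have "\<dots> = (\<Sum>i\<in>{0, n}. fps_nth r i * fps_nth r (n - i))"
      by (rule sum.mono_neutral_right) (use less in auto)
    also have "\<dots> = 2 * fps_nth r n"
      using less.prems r0 by simp
    finally show ?case
      using gap[OF less.prems] by simp
  qed
  with r2 r0 show ?thesis
    by blast
qed

lemma lam_sqrt_exists:
  fixes R :: "complex poly"
  assumes R: "\<forall>i>g. coeff R i = (if i = 2 * g + 1 then 1 else 0)"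
  shows "\<exists>s. s^2 = lam R \<and> zpow_shape s (2 * g + 1)"
proof -
  define T where "T = fls_shift (- int (4 * g + 2)) (lam R)"
  have T_nth: "fls_nth T n = fls_nth (lam R) (n - int (4 * g + 2))" for n
    by (simp add: T_def algebra_simps)
  have T_neg: "fls_nth T n = 0" if "n < 0" for n
    unfolding T_nth by (rule lam_nth_eq_0I) (use R that in auto)
  have T0: "fls_nth T 0 = 1"
    using lam_nth_even[of R "2 * g + 1"] R by (simp add: T_nth)
  have T_gap: "fls_nth T n = 0" if "0 < n" "n < int (2 * g + 2)" for n
    unfolding T_nth by (rule lam_nth_eq_0I) (use R that in auto)
  have "fls_subdegree T \<ge> 0"
    by (rule fls_subdegree_ge0I) (simp add: T_neg)
  then have TA: "fps_to_fls (fls_regpart T) = T"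
    by simp
  obtain r where r2: "r^2 = fls_regpart T" and r0: "fps_nth r 0 = 1"
      and r_gap: "\<And>n. 0 < n \<Longrightarrow> n < 2 * g + 2 \<Longrightarrow> fps_nth r n = 0"
    using fps_sqrt_gap[of "fls_regpart T" "2 * g + 2"] T0 T_gap by force
  define s where "s = fls_shift (int (2 * g + 1)) (fps_to_fls r)"
  have "s = zz^(2 * g + 1) * fps_to_fls r"
    by (simp only: s_def fls_X_inv_power_times_conv_shift)
  then have "s^2 = (zz^(2 * g + 1))^2 * (fps_to_fls r)^2"
    by (simp only: power_mult_distrib)
  also have "\<dots> = zz^(4 * g + 2) * fps_to_fls (r^2)"
    by (simp only: fps_to_fls_power flip: power_mult) (simp add: mult.commute)
  also have "\<dots> = lam R"
    by (simp only: r2 TA fls_X_inv_power_times_conv_shift) (simp add: T_def)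
  finally have "s^2 = lam R" .
  moreover have "zpow_shape s (2 * g + 1)"
    unfolding zpow_shape_def
  proof (intro allI impI)
    fix n :: int assume n: "n \<le> 0"
    consider "n + int (2 * g + 1) < 0" | "n = - int (2 * g + 1)"
      | "0 < nat (n + int (2 * g + 1))" "nat (n + int (2 * g + 1)) < 2 * g + 2"
      using n by linarith
    then show "fls_nth s n = (if n = - int (2 * g + 1) then 1 else 0)"
      by cases (auto simp: s_def r0 r_gap)
  qed
  ultimately show ?thesis
    by blast
qed

lemma h_shape_div:
  assumes s: "zpow_shape s (2 * g + 1)"
    and qg: "coeff q g = 1" and qhi: "\<forall>i>g. coeff q i = 0" and plo: "\<forall>i\<ge>g. coeff p i = 0"
  shows "h_shape ((s - lam p) / lam q)"
proof -
  have lqg: "fls_nth (lam q) (- (2 * int g)) = 1"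
    using lam_nth_even[of q g] qg by simp
  then have lq0: "lam q \<noteq> 0"
    by auto
  define W where "W = (s - lam p) / lam q - zz"
  have "lam q * ((s - lam p) / lam q) = s - lam p"
    using lq0 by simp
  then have qW: "lam q * W = s - lam p - lam q * zz"
    by (simp add: W_def right_diff_distrib)
  have qW_nth: "fls_nth (lam q * W) n = 0" if n: "n \<le> - 2 * int g" for n
  proof -
    have "fls_nth s n = (if n = - (2 * int g + 1) then 1 else 0)"
      using s n unfolding zpow_shape_def by auto
    moreover have "fls_nth (lam p) n = 0"
      by (rule lam_nth_eq_0I) (use n plo in auto)
    moreover have "fls_nth (lam q * zz) n = (if n = - (2 * int g + 1) then 1 else 0)"
    proof (cases "n = - (2 * int g + 1)")
      case False
      have "fls_nth (lam q) (n + 1) = 0"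
      proof (rule lam_nth_eq_0I)
        fix i assume "n + 1 = - (2 * int i)"
        then have "i > g"
          using n False by presburger
        then show "coeff q i = 0"
          using qhi by auto
      qed
      then show ?thesis
        using False by (simp add: fls_X_inv_times_conv_shift)
    qed (use lqg in \<open>simp add: fls_X_inv_times_conv_shift\<close>)
    ultimately show ?thesis
      unfolding qW by simp
  qed
  have "fls_subdegree (lam q) = - (2 * int g)"
  proof (rule fls_subdegree_eqI)
    show "fls_nth (lam q) k = 0" if "k < - (2 * int g)" for k
      by (rule lam_nth_eq_0I) (use that qhi in auto)
  qed (use lqg in simp)
  moreover have "1 - 2 * int g \<le> fls_subdegree (lam q * W)" if "W \<noteq> 0"
    using that lq0 by (intro fls_subdegree_geI) (auto simp: qW_nth)
  ultimately have "fls_nth W n = 0" if "n \<le> 0" for n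
    using lq0 that by (cases "W = 0") auto
  then show ?thesis
    unfolding h_shape_def by (simp add: W_def)
qed

text \<open>The point of \<open>M(2g+1)\<close> with prescribed \<open>p, q, a\<close> and \<open>b = -p\<close>: \<open>h\<close> is the root
  \<open>(s - p(\<lambda>)) / q(\<lambda>)\<close> of \<open>q(\<lambda>) h^2 + 2 p(\<lambda>) h - a(\<lambda>) = 0\<close>, where \<open>s^2 = p^2 + q a\<close>,
  and then \<open>H(2g+1) = s\<close>.\<close>
lemma Mkdv_of_sqrt:
  assumes sq: "s^2 = lam (p * p + q * a)" and s: "zpow_shape s (2 * g + 1)"
    and qg: "coeff q g = 1" and qhi: "\<forall>i>g. coeff q i = 0" and plo: "\<forall>i\<ge>g. coeff p i = 0"
  shows "\<exists>h \<in> Mkdv g. Hs h (2 * g + 1) = lam p + lam q * h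
            \<and> Ss h (2 * g + 1) = lam a + lam (- p) * h"
proof -
  define h where "h = (s - lam p) / lam q"
  have shape: "h_shape h"
    unfolding h_def by (rule h_shape_div[OF s qg qhi plo])
  have lq0: "lam q \<noteq> 0"
    using lam_nth_even[of q g] qg by auto
  have s_eq: "s = lam p + lam q * h"
    using lq0 by (simp add: h_def)
  have "lam q * (2 * lam p * h + lam q * (h * h) - lam a) = 0"
    using sq unfolding s_eq by (simp add: lam_add lam_mult power2_eq_square algebra_simps)
  then have "2 * lam p * h + lam q * (h * h) = lam a"
    using lq0 by simp
  then have hs: "h * s = lam a + lam (- p) * h"
    using s_eq by (simp add: lam_uminus algebra_simps)
  have H: "Hs h (2 * g + 1) = s"
  proof (rule lam_module_eqI[OF shape Hs_in_lam_module])
    show "s \<in> lam_module h"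
      using s_eq by (rule lam_moduleI)
    show "\<forall>n\<le>0. fls_nth (Hs h (2 * g + 1)) n = fls_nth s n"
      using zpow_shape_Hs[OF shape, of "2 * g + 1"] s unfolding zpow_shape_def by simp
  qed
  have "flow h (2 * g + 1) = 0"
    by (rule flow_eq_0I[OF shape]) (simp only: H hs lam_moduleI)
  then have "Ss h (2 * g + 1) = lam a + lam (- p) * h"
    using hs H by (simp add: flow_def)
  with shape \<open>flow h (2 * g + 1) = 0\<close> H s_eq show ?thesis
    unfolding Mkdv_def by auto
qed

lemma exists_pp_plus_qa_top_monom:
  fixes p q :: "'a::field poly"
  assumes q: "degree q = g" "q \<noteq> 0"
  shows "\<exists>a. coeff a 0 = t \<and> (\<forall>i>g. coeff (p * p + q * a) i = (if i = 2 * g + 1 then 1 else 0))"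
proof -
  define M where "M = monom 1 (2 * g + 1) - p * p"
  define d where "d = M div q"
  define \<alpha> where "\<alpha> = t - coeff d 0"
  define a where "a = d + [:\<alpha>:]"
  have rem: "coeff (M mod q) i = 0" if "g \<le> i" for i
    using degree_mod_less[OF q(2), of M] q that by (cases "M mod q = 0") (auto simp: coeff_eq_0)
  have "p * p + q * a = monom 1 (2 * g + 1) - M mod q + smult \<alpha> q"
    using div_mult_mod_eq[of M q] by (simp add: a_def M_def d_def algebra_simps)
  then have "\<forall>i>g. coeff (p * p + q * a) i = (if i = 2 * g + 1 then 1 else 0)"
    using rem q by (auto simp: coeff_monom coeff_eq_0)
  moreover have "coeff a 0 = t"
    by (simp add: a_def \<alpha>_def)
  ultimately show ?thesis
    by blast
qed

lemma a_coeff_0: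
  "a_coeff g c 0 = 2 * c (2 * g + 1) + (\<Sum>k<g. q_coeff g c k * c (2 * k + 1))
     - (\<Sum>k\<in>{1..g}. b_coeff g c k * c (2 * k))"
  by (simp add: a_coeff_def H1_coeff_eq)

text \<open>Every value of the coordinates \<open>h_1, ..., h_(2g+1)\<close> is attained on \<open>M(2g+1)\<close>: take
  \<open>p, q\<close> as dictated by \<open>h_1, ..., h_2g\<close>, choose \<open>a\<close> with \<open>p^2 + q a = \<lambda>^(2g+1) + O(\<lambda>^g)\<close>
  and constant term matching \<open>h_(2g+1)\<close>, and apply \<open>Mkdv_of_sqrt\<close>.\<close>
lemma Mkdv_realizes_coords:
  "\<exists>h\<in>Mkdv g. agree_upto (2 * g + 1) c (coords h) \<and>
     (\<exists>p q a. Hs h (2 * g + 1) = lam p + lam q * h \<and> Ss h (2 * g + 1) = lam a + lam (- p) * h \<and>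
        (\<forall>i>g. coeff (p * p + q * a) i = (if i = 2 * g + 1 then 1 else 0)))"
proof -
  define q where "q = Poly (map (q_coeff g c) [0..<g+1])"
  define p where "p = Poly (map (p_coeff g c) [0..<g+1])"
  have cq: "coeff q m = q_coeff g c m" for m
    by (simp add: q_def nth_default_def q_coeff_gt del: upt_Suc)
  have cp: "coeff p m = p_coeff g c m" for m
    by (simp add: p_def nth_default_def p_coeff_ge del: upt_Suc)
  have qg: "coeff q g = 1" and qhi: "\<forall>i>g. coeff q i = 0" and plo: "\<forall>i\<ge>g. coeff p i = 0"
    by (simp_all add: cq cp q_coeff_top q_coeff_gt p_coeff_ge)
  have degq: "degree q = g"
    by (intro antisym degree_le le_degree) (simp_all add: qg qhi)
  have q0: "q \<noteq> 0"
    using qg by auto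
  obtain a where a0: "coeff a 0 = 2 * c (2 * g + 1) + (\<Sum>k<g. q_coeff g c k * c (2 * k + 1))
        + (\<Sum>k\<in>{1..g}. p_coeff g c k * c (2 * k))"
      and top: "\<forall>i>g. coeff (p * p + q * a) i = (if i = 2 * g + 1 then 1 else 0)"
    using exists_pp_plus_qa_top_monom[OF degq q0] by blast
  obtain s where s2: "s^2 = lam (p * p + q * a)" and s: "zpow_shape s (2 * g + 1)"
    using lam_sqrt_exists[OF top] by blast
  obtain h where h: "h \<in> Mkdv g" and H: "Hs h (2 * g + 1) = lam p + lam q * h"
      and S: "Ss h (2 * g + 1) = lam a + lam (- p) * h"
    using Mkdv_of_sqrt[OF s2 s qg qhi plo] by blast
  define c' where "c' = coords h"
  have shape: "h_shape h"
    using h by (simp add: Mkdv_def)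
  have q': "q_coeff g c' m = q_coeff g c m" and b': "b_coeff g c' m = - p_coeff g c m"
    and a': "a_coeff g c' 0 = coeff a 0" for m
    using Hs_decomp_coeffs[OF shape H] Ss_decomp_coeffs[OF shape H S] by (simp_all add: c'_def cq cp)
  have ag: "agree_upto (2 * g) c c'"
    by (rule agree_upto_of_pq_coeffs) (use Hs_decomp_coeffs[OF shape H] in \<open>simp_all add: c'_def cq cp\<close>)
  have "(\<Sum>k<g. q_coeff g c' k * c' (2 * k + 1)) = (\<Sum>k<g. q_coeff g c k * c (2 * k + 1))"
    by (intro sum.cong refl) (auto simp: q' agree_uptoD[OF ag])
  moreover have "(\<Sum>k\<in>{1..g}. b_coeff g c' k * c' (2 * k)) = - (\<Sum>k\<in>{1..g}. p_coeff g c k * c (2 * k))"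
    by (auto simp: b' agree_uptoD[OF ag] simp flip: sum_negf intro!: sum.cong)
  ultimately have "c' (2 * g + 1) = c (2 * g + 1)"
    using a' a_coeff_0[of g c'] a0 by simp
  with ag have "agree_upto (2 * g + 1) c c'"
    unfolding agree_upto_def by (metis le_Suc_eq Suc_eq_plus1)
  with h H S top show ?thesis
    unfolding c'_def by blast
qed

lemma lam_mult_h_nth_top:
  assumes h: "h_shape h" and "coeff q g = 1" "\<forall>i>g. coeff q i = 0"
  shows "fls_nth (lam q * h) (- (2 * int g + 1)) = 1"
proof -
  have "degree q \<le> g"
    by (rule degree_le) fact
  from lam_mult_h_nth_odd[OF h this order.refl] assms(2) show ?thesis
    by simp
qed

text \<open>On \<open>M(2g+1)\<close> the identity \<open>h H(2g+1) = S(2g+1)\<close> says that \<open>h\<close> is a root of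
  \<open>q(\<lambda>) X^2 + (p(\<lambda>) - b(\<lambda>)) X - a(\<lambda>)\<close>, whose coefficients only depend on \<open>h_1, ..., h_(2g+1)\<close>.
  Two roots of the form \<open>z + O(z^-1)\<close> coincide, since their sum does not cancel the top term of
  \<open>q\<close>.\<close>
lemma Mkdv_coords_inj:
  assumes h: "h \<in> Mkdv g" and h': "h' \<in> Mkdv g" and ag: "agree_upto (2 * g + 1) (coords h) (coords h')"
  shows "h = h'"
proof -
  have shape: "h_shape h" and shape': "h_shape h'"
    using h h' by (simp_all add: Mkdv_def)
  obtain p q where H: "Hs h (2 * g + 1) = lam p + lam q * h"
    using Hs_in_lam_module by (blast elim: lam_moduleE)
  obtain a b where S: "Ss h (2 * g + 1) = lam a + lam b * h"
    using Ss_in_lam_module by (blast elim: lam_moduleE)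
  obtain p' q' where H': "Hs h' (2 * g + 1) = lam p' + lam q' * h'"
    using Hs_in_lam_module by (blast elim: lam_moduleE)
  obtain a' b' where S': "Ss h' (2 * g + 1) = lam a' + lam b' * h'"
    using Ss_in_lam_module by (blast elim: lam_moduleE)
  have ag': "agree_upto r (coords h') (coords h)" if "r \<le> 2 * g + 1" for r
    using agree_upto_sym[OF agree_upto_mono[OF ag that]] .
  have "p' = p" "q' = q" "a' = a" "b' = b"
    by (simp_all add: poly_eq_iff Hs_decomp_coeffs[OF shape H] Hs_decomp_coeffs[OF shape' H']
        Ss_decomp_coeffs[OF shape H S] Ss_decomp_coeffs[OF shape' H' S'])
      (auto intro!: p_coeff_agree q_coeff_agree a_coeff_agree b_coeff_agree ag')
  have "h * (lam p + lam q * h) = lam a + lam b * h" "h' * (lam p + lam q * h') = lam a + lam b * h'"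
    using h h' H S H' S' \<open>p' = p\<close> \<open>q' = q\<close> \<open>a' = a\<close> \<open>b' = b\<close> by (simp_all add: Mkdv_def flow_def)
  then have "(h - h') * (lam q * (h + h') + lam p - lam b) = 0"
    by (simp add: algebra_simps)
  moreover have "lam q * (h + h') + lam p - lam b \<noteq> 0"
  proof -
    have qg: "coeff q g = 1" and qhi: "\<forall>i>g. coeff q i = 0"
      by (simp_all add: Hs_decomp_coeffs[OF shape H] q_coeff_top q_coeff_gt)
    have "fls_nth (lam q * (h + h') + lam p - lam b) (- (2 * int g + 1)) = 2"
      using lam_mult_h_nth_top[OF shape qg qhi] lam_mult_h_nth_top[OF shape' qg qhi]
      by (simp add: distrib_left lam_nth_odd)
    then show ?thesis
      by (metis fls_zero_nth zero_neq_numeral)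
  qed
  ultimately show ?thesis
    by simp
qed

lemma Vcoord_eq_V_of_coords: "Vcoord g c = V_of_coords g c"
proof -
  obtain h where h: "h \<in> Mkdv g" and ag: "agree_upto (2 * g + 1) c (coords h)"
    using Mkdv_realizes_coords by blast
  have "(THE h'. h' \<in> Mkdv g \<and> (\<forall>l\<in>{1..2 * g + 1}. fls_nth h' (int l) = c l)) = h"
  proof (rule the_equality)
    show "h \<in> Mkdv g \<and> (\<forall>l\<in>{1..2 * g + 1}. fls_nth h (int l) = c l)"
      using h ag unfolding agree_upto_def coords_def by auto
    fix h' assume "h' \<in> Mkdv g \<and> (\<forall>l\<in>{1..2 * g + 1}. fls_nth h' (int l) = c l)"
    moreover from this have "agree_upto (2 * g + 1) (coords h') (coords h)"
      using ag unfolding agree_upto_def coords_def by auto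
    ultimately show "h' = h"
      using Mkdv_coords_inj h by blast
  qed
  then have "Vcoord g c = Vmat (2 * g + 1) h"
    by (simp add: Vcoord_def)
  also have "\<dots> = V_of_coords g c"
    using h Vmat_eq_V_of_coords V_of_coords_agree[OF ag] by (simp add: Mkdv_def)
  finally show ?thesis .
qed

section \<open>The image of \<open>V(2g+1)\<close> lies in \<open>S~\<close>\<close>

abbreviation entry :: "'a^'n^'m \<Rightarrow> 'm \<Rightarrow> 'n \<Rightarrow> 'a" where
  "entry M r s \<equiv> vec_nth (vec_nth M r) s"

lemma mat2_entry [simp]:
  "entry (mat2 a b c d) 1 1 = a" "entry (mat2 a b c d) 1 2 = b"
  "entry (mat2 a b c d) 2 1 = c" "entry (mat2 a b c d) 2 2 = d"
  by (simp_all add: mat2_def)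

lemma mat2_0: "mat2 0 0 0 0 = (0 :: 'a::zero^2^2)"
  by (simp add: vec_eq_iff forall_2)

lemma trace_2:
  fixes M :: "'a::semiring_1^2^2"
  shows "trace M = entry M 1 1 + entry M 2 2"
  by (simp add: trace_def sum_2)

lemma trace_mult_2:
  fixes M N :: "'a::semiring_1^2^2"
  shows "trace (M ** N) = entry M 1 1 * entry N 1 1 + entry M 1 2 * entry N 2 1
     + entry M 2 1 * entry N 1 2 + entry M 2 2 * entry N 2 2"
  by (simp add: trace_2 matrix_matrix_mult_def sum_2 algebra_simps)

lemma trace_sum: "trace (\<Sum>a\<in>A. f a :: 'a::comm_semiring_1^'n^'n) = (\<Sum>a\<in>A. trace (f a))"
  unfolding trace_def by (simp add: sum_component) (rule sum.swap)

lemma Hc_eq: "Hc X i = (1/2) * (\<Sum>a\<le>i. trace (X a ** X (i - a)))"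
  by (simp add: Hc_def trace_sum)

lemma Hc_traceless_mat2:
  "Hc (\<lambda>i. mat2 (coeff p i) (coeff q i) (coeff a i) (- coeff p i)) i = coeff (p * p + q * a) i"
proof -
  have "(\<Sum>k\<le>i. trace (mat2 (coeff p k) (coeff q k) (coeff a k) (- coeff p k) **
          mat2 (coeff p (i - k)) (coeff q (i - k)) (coeff a (i - k)) (- coeff p (i - k)))) =
        (\<Sum>k\<le>i. 2 * (coeff p k * coeff p (i - k)) + coeff q k * coeff a (i - k) + coeff a k * coeff q (i - k))"
    by (simp add: trace_mult_2 add.assoc)
  also have "\<dots> = 2 * coeff (p * p) i + coeff (q * a) i + coeff (a * q) i"
    by (simp add: coeff_mult sum.distrib sum_distrib_left)
  finally show ?thesis
    by (simp add: Hc_eq mult.commute)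
qed

lemma V_of_coords_in_Stilde: "V_of_coords g c \<in> Stilde g"
proof -
  obtain h p q a where h: "h \<in> Mkdv g" and ag: "agree_upto (2 * g + 1) c (coords h)"
      and H: "Hs h (2 * g + 1) = lam p + lam q * h" and S: "Ss h (2 * g + 1) = lam a + lam (- p) * h"
      and top: "\<forall>i>g. coeff (p * p + q * a) i = (if i = 2 * g + 1 then 1 else 0)"
    using Mkdv_realizes_coords by blast
  have shape: "h_shape h"
    using h by (simp add: Mkdv_def)
  have V: "V_of_coords g c = (\<lambda>i. mat2 (coeff p i) (coeff q i) (coeff a i) (- coeff p i))"
    using V_of_coords_agree[OF ag] Hs_decomp_coeffs[OF shape H] Ss_decomp_coeffs[OF shape H S]
    by (simp add: V_of_coords_def)
  have "V_of_coords g c \<in> MA g"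
    unfolding MA_def
  proof (intro CollectI conjI allI impI)
    show "V_of_coords g c (g + 1) = Amat"
      using a_coeff_top[of g c] by (simp add: V_of_coords_def p_coeff_ge q_coeff_gt b_coeff_ge Amat_def)
    show "trace (V_of_coords g c i) = 0" for i
      by (simp add: V trace_2)
    show "V_of_coords g c i = 0" if "g + 1 < i" for i
      using that by (simp add: V_of_coords_def p_coeff_ge q_coeff_gt b_coeff_ge a_coeff_gt mat2_0)
  qed
  with top show ?thesis
    by (auto simp: Stilde_def V Hc_traceless_mat2)
qed

section \<open>The tangent space of \<open>S~\<close>\<close>

definition dHc :: "pmat \<Rightarrow> pmat \<Rightarrow> nat \<Rightarrow> complex" where
  "dHc X Y i = (1/2) * (\<Sum>a\<le>i. trace (Y a ** X (i - a)) + trace (X a ** Y (i - a)))"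

lemma msc_entry [simp]: "entry (msc t M) r s = t * entry M r s"
  by (simp add: msc_def)

lemma msc_0 [simp]: "msc 0 M = 0"
  by (simp add: msc_def vec_eq_iff)

lemma trace_mult_has_field_derivative:
  fixes A B :: "'a::real_normed_field \<Rightarrow> 'a^2^2"
  assumes "\<And>r s. ((\<lambda>t. entry (A t) r s) has_field_derivative entry A' r s) (at x)"
    and "\<And>r s. ((\<lambda>t. entry (B t) r s) has_field_derivative entry B' r s) (at x)"
  shows "((\<lambda>t. trace (A t ** B t)) has_field_derivative trace (A' ** B x) + trace (A x ** B')) (at x)"
  unfolding trace_mult_2
  by (rule derivative_eq_intros refl assms)+ (simp add: algebra_simps)

lemma Hc_has_field_derivative:
  assumes "\<And>a r s. ((\<lambda>t. entry (G t a) r s) has_field_derivative entry (G' a) r s) (at x)"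
  shows "((\<lambda>t. Hc (G t) i) has_field_derivative dHc (G x) G' i) (at x)"
  unfolding Hc_eq dHc_def
  by (intro DERIV_cmult DERIV_sum trace_mult_has_field_derivative assms)

lemma TStilde_iff:
  "Y \<in> TStilde g X \<longleftrightarrow>
     (\<forall>i>g. Y i = 0) \<and> (\<forall>i. trace (Y i) = 0) \<and> (\<forall>i\<in>{g+1..2*g+1}. dHc X Y i = 0)"
proof -
  have line: "((\<lambda>t. entry (X a + msc t (Y a)) r s) has_field_derivative entry (Y a) r s) (at 0)"
    for a r s
  proof -
    have "((\<lambda>t. entry (X a) r s + entry (Y a) r s * t) has_field_derivative 0 + entry (Y a) r s) (at 0)"
      by (intro DERIV_add DERIV_const DERIV_cmult_Id)
    then show ?thesis
      by (simp add: mult.commute)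
  qed
  from Hc_has_field_derivative[of "\<lambda>t m. X m + msc t (Y m)" Y 0, OF line]
  have D: "((\<lambda>t. Hc (\<lambda>m. X m + msc t (Y m)) i) has_field_derivative dHc X Y i) (at 0)" for i
    by simp
  have "((\<lambda>t. Hc (\<lambda>m. X m + msc t (Y m)) i) has_field_derivative 0) (at 0) \<longleftrightarrow> dHc X Y i = 0"
    for i
  proof
    assume "((\<lambda>t. Hc (\<lambda>m. X m + msc t (Y m)) i) has_field_derivative 0) (at 0)"
    then show "dHc X Y i = 0"
      using DERIV_unique[OF D[of i]] by blast
  qed (use D[of i] in simp)
  then show ?thesis
    unfolding TStilde_def by simp
qed

lemma entry_sum_msc: "entry (\<Sum>k\<in>K. msc (w k) (M k)) r s = (\<Sum>k\<in>K. w k * entry (M k) r s)"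
  by (simp add: sum_component)

lemma dHc_lincomb: "dHc X (\<lambda>a. \<Sum>k\<in>K. msc (w k) (W k a)) i = (\<Sum>k\<in>K. w k * dHc X (W k) i)"
proof -
  have "dHc X (\<lambda>a. \<Sum>k\<in>K. msc (w k) (W k a)) i =
      (1/2) * (\<Sum>a\<le>i. \<Sum>k\<in>K. w k * (trace (W k a ** X (i - a)) + trace (X a ** W k (i - a))))"
    unfolding dHc_def trace_mult_2 entry_sum_msc
    by (simp add: sum_distrib_left sum_distrib_right sum.distrib algebra_simps)
  also have "\<dots> = (\<Sum>k\<in>K. w k * dHc X (W k) i)"
    unfolding dHc_def by (subst sum.swap) (simp add: sum_distrib_left sum_distrib_right algebra_simps)
  finally show ?thesis .
qed

lemma dHc_diff: "dHc X (\<lambda>a. Y a - Z a) i = dHc X Y i - dHc X Z i"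
  unfolding dHc_def trace_mult_2 by (simp add: sum_subtractf algebra_simps)

lemma TStilde_lincomb:
  assumes "\<And>k. k \<in> K \<Longrightarrow> W k \<in> TStilde g X"
  shows "(\<lambda>i. \<Sum>k\<in>K. msc (w k) (W k i)) \<in> TStilde g X"
  using assms unfolding TStilde_iff
  by (simp add: dHc_lincomb trace_sum vec_eq_iff sum_component trace_2 sum.distrib[symmetric]
      flip: distrib_left)

lemma TStilde_diff:
  "Y \<in> TStilde g X \<Longrightarrow> Z \<in> TStilde g X \<Longrightarrow> (\<lambda>i. Y i - Z i) \<in> TStilde g X"
  unfolding TStilde_iff by (simp add: dHc_diff trace_sub)

lemma has_field_derivative_const_eq_0:
  assumes "\<And>t. f t = a" and "(f has_field_derivative D) (at x)"
  shows "D = 0"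
proof -
  have "f = (\<lambda>_. a)"
    using assms(1) by auto
  then have "(f has_field_derivative 0) (at x)"
    by (simp add: DERIV_const)
  with assms(2) show ?thesis
    by (rule DERIV_unique)
qed

lemma trace_MA: "X \<in> MA g \<Longrightarrow> trace (X i) = 0"
  unfolding MA_def by (cases "i \<le> g"; cases "i = g + 1") (auto simp: Amat_def trace_2)

lemma curve_velocity_in_TStilde:
  assumes \<gamma>: "\<And>t. \<gamma> t \<in> Stilde g"
    and D: "\<And>i r s. ((\<lambda>t. entry (\<gamma> t i) r s) has_field_derivative entry (Y i) r s) (at 0)"
  shows "Y \<in> TStilde g (\<gamma> 0)"
  unfolding TStilde_iff
proof (intro conjI allI impI ballI)
  have MA: "\<gamma> t \<in> MA g" for t
    using \<gamma> by (simp add: Stilde_def)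
  show "Y i = 0" if "g < i" for i
  proof -
    have "\<gamma> t i = (if i = g + 1 then Amat else 0)" for t
      using MA[of t] that by (auto simp: MA_def)
    then have "entry (Y i) r s = 0" for r s
      by (intro has_field_derivative_const_eq_0[OF _ D]) simp
    then show ?thesis
      by (simp add: vec_eq_iff)
  qed
  show "trace (Y i) = 0" for i
    unfolding trace_2
    by (rule has_field_derivative_const_eq_0[OF _ DERIV_add[OF D D]])
      (use trace_MA[OF MA] in \<open>simp add: trace_2\<close>)
  show "dHc (\<gamma> 0) Y i = 0" if "i \<in> {g+1..2*g+1}" for i
    using \<gamma> that
    by (intro has_field_derivative_const_eq_0[OF _ Hc_has_field_derivative[OF D],
          where a = "if i = 2 * g + 1 then 1 else 0"])
      (auto simp: Stilde_def)
qed

lemma Efield_entry: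
  "entry (Efield X i) 1 1 = - entry (X i) 1 2"
  "entry (Efield X i) 1 2 = 0"
  "entry (Efield X i) 2 1 = entry (X i) 1 1 - entry (X i) 2 2"
  "entry (Efield X i) 2 2 = entry (X i) 1 2"
  by (simp_all add: Efield_def Amat_def matrix_matrix_mult_def sum_2)

text \<open>Each summand of \<open>dHc X (Efield X) i\<close> is
  \<open>tr([A, X_a] X_b + X_a [A, X_b]) = tr(A X_a X_b - X_a X_b A) = 0\<close>.\<close>
lemma Efield_in_TStilde:
  assumes "X \<in> MA g"
  shows "Efield X \<in> TStilde g X"
  unfolding TStilde_iff
proof (intro conjI allI impI ballI)
  show "Efield X i = 0" if "g < i" for i
  proof (cases "i = g + 1")
    case False
    with assms that have "X i = 0"
      by (simp add: MA_def)
    then show ?thesis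
      by (simp add: vec_eq_iff forall_2 Efield_entry)
  qed (use assms in \<open>simp add: MA_def vec_eq_iff forall_2 Efield_entry Amat_def\<close>)
  show "trace (Efield X i) = 0" for i
    by (simp add: trace_2 Efield_entry)
  show "dHc X (Efield X) i = 0" for i
    unfolding dHc_def by (simp add: trace_mult_2 Efield_entry algebra_simps)
qed

lemma dHc_upper_right:
  assumes "\<And>a. entry (Y a) 1 1 = 0 \<and> entry (Y a) 2 1 = 0 \<and> entry (Y a) 2 2 = 0"
  shows "dHc X Y i = (\<Sum>a\<le>i. entry (X a) 2 1 * entry (Y (i - a)) 1 2)"
proof -
  have "(\<Sum>a\<le>i. entry (Y a) 1 2 * entry (X (i - a)) 2 1) = (\<Sum>a\<le>i. entry (X a) 2 1 * entry (Y (i - a)) 1 2)"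
    using sum.atLeastAtMost_rev[of "\<lambda>a. entry (Y a) 1 2 * entry (X (i - a)) 2 1" 0 i]
    by (simp add: atLeast0AtMost mult.commute)
  then show ?thesis
    using assms by (simp add: dHc_def trace_mult_2 sum.distrib)
qed

text \<open>The entries \<open>(1,1)\<close> and \<open>(2,1)\<close> of \<open>Y_g, ..., Y_0\<close>, indexed by \<open>r = 0, 2, ..., 2g\<close> and
  \<open>r = 1, 3, ..., 2g + 1\<close> respectively. They are coordinates on the tangent space of \<open>S~\<close>,
  and the \<open>r\<close>-th one of \<open>V_of_coords g c\<close> depends only on \<open>c_1, ..., c_r\<close>, affinely in \<open>c_r\<close>.\<close>
definition free_entry :: "nat \<Rightarrow> nat \<Rightarrow> pmat \<Rightarrow> complex" where
  "free_entry g r Y =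
     (if even r then entry (Y (g - r div 2)) 1 1 else entry (Y ((2 * g + 1 - r) div 2)) 2 1)"

text \<open>Since \<open>X_(g+1) = A\<close>, the constraint \<open>dHc X Y (g + 1 + m) = 0\<close> reads
  \<open>(Y_m)_12 + (terms in (Y_(m+1))_12, ..., (Y_g)_12) = 0\<close> once the free entries (and hence, by
  tracelessness, all entries but the \<open>(1,2)\<close> ones) vanish.\<close>
lemma TStilde_eq_0I:
  assumes X: "X \<in> MA g" and Y: "Y \<in> TStilde g X"
    and free: "\<And>r. r \<le> 2 * g + 1 \<Longrightarrow> free_entry g r Y = 0"
  shows "Y = (\<lambda>i. 0)"
proof -
  have Yhi: "Y i = 0" if "g < i" for i
    using Y that by (simp add: TStilde_iff)
  have lower: "entry (Y i) 1 1 = 0 \<and> entry (Y i) 2 1 = 0 \<and> entry (Y i) 2 2 = 0" for i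
  proof (cases "i \<le> g")
    case True
    have "entry (Y i) 1 1 = 0" "entry (Y i) 2 1 = 0"
      using free[of "2 * (g - i)"] free[of "2 * g + 1 - 2 * i"] True
      by (simp_all add: free_entry_def)
    moreover have "trace (Y i) = 0"
      using Y by (simp add: TStilde_iff)
    ultimately show ?thesis
      by (simp add: trace_2)
  qed (simp add: Yhi)
  define y where "y i = entry (Y i) 1 2" for i
  have dHc: "dHc X Y i = (\<Sum>a\<le>i. entry (X a) 2 1 * y (i - a))" for i
    unfolding y_def by (rule dHc_upper_right[OF lower])
  have y: "y m = 0" if "m \<le> g" for m
    using that
  proof (induction "g - m" arbitrary: m rule: less_induct)
    case less
    have summand: "entry (X a) 2 1 * y (g + 1 + m - a) = (if a = g + 1 then y m else 0)"
      if "a \<le> g + 1 + m" for a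
    proof -
      consider "a = g + 1" | "g + 1 < a" | "a < g + 1" "g < g + 1 + m - a" | "a < g + 1" "g + 1 + m - a \<le> g"
        by linarith
      then show ?thesis
        by cases (use X less in \<open>auto simp: MA_def Amat_def y_def Yhi\<close>)
    qed
    have "dHc X Y (g + 1 + m) = (\<Sum>a\<le>g + 1 + m. if a = g + 1 then y m else 0)"
      unfolding dHc by (rule sum.cong) (simp_all only: summand atMost_iff)
    then have "dHc X Y (g + 1 + m) = y m"
      by simp
    moreover have "dHc X Y (g + 1 + m) = 0"
      using Y less.prems by (simp add: TStilde_iff)
    ultimately show ?case
      by simp
  qed
  show ?thesis
  proof
    fix i
    show "Y i = 0"
      using lower[of i] y[of i] Yhi[of i] by (cases "i \<le> g") (auto simp: vec_eq_iff forall_2 y_def)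
  qed
qed

lemma free_entry_lincomb:
  "free_entry g r (\<lambda>i. \<Sum>k\<in>K. msc (w k) (W k i)) = (\<Sum>k\<in>K. w k * free_entry g r (W k))"
  by (simp add: free_entry_def entry_sum_msc)

lemma free_entry_msc: "free_entry g r (\<lambda>i. msc s (Y i)) = s * free_entry g r Y"
  by (simp add: free_entry_def)

lemma free_entry_diff: "free_entry g r (\<lambda>i. Y i - Z i) = free_entry g r Y - free_entry g r Z"
  by (simp add: free_entry_def)

lemma TStilde_eqI:
  assumes "X \<in> MA g" "Y \<in> TStilde g X" "Z \<in> TStilde g X"
    and "\<And>r. r \<le> 2 * g + 1 \<Longrightarrow> free_entry g r Y = free_entry g r Z"
  shows "Y = Z"
proof -
  have "(\<lambda>i. Y i - Z i) = (\<lambda>i. 0)"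
    using assms by (intro TStilde_eq_0I TStilde_diff) (simp_all add: free_entry_diff)
  then show ?thesis
    by (simp add: fun_eq_iff)
qed

section \<open>Transversality\<close>

lemma free_entry_V_of_coords:
  "free_entry g r (V_of_coords g c) =
     (if even r then p_coeff g c (g - r div 2) else a_coeff g c ((2 * g + 1 - r) div 2))"
  by (simp add: free_entry_def V_of_coords_def)

lemma free_entry_V_of_coords_agree:
  assumes "r \<le> 2 * g + 1" "agree_upto r c c'"
  shows "free_entry g r (V_of_coords g c) = free_entry g r (V_of_coords g c')"
proof (cases "even r")
  case True
  with assms have "2 * (g - (g - r div 2)) = r"
    by (auto elim!: evenE)
  with True assms show ?thesis
    by (simp add: free_entry_V_of_coords p_coeff_agree)
next
  case False
  with assms have "2 * g + 1 - 2 * ((2 * g + 1 - r) div 2) = r"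
    by (auto elim!: oddE)
  with False assms show ?thesis
    by (simp add: free_entry_V_of_coords a_coeff_agree)
qed

definition free_slope :: "nat \<Rightarrow> nat \<Rightarrow> complex" where
  "free_slope g r = (if even r then -1 else if r = 2 * g + 1 then 2 else 1)"

lemma free_entry_V_of_coords_shift:
  assumes r: "1 \<le> r" "r \<le> 2 * g + 1"
  shows "free_entry g r (V_of_coords g (c(r := c r + t))) = free_entry g r (V_of_coords g c) + free_slope g r * t"
proof -
  define c' where "c' = c(r := c r + t)"
  have ag: "agree_upto r' c' c" if "r' < r" for r'
    unfolding c'_def using agree_upto_fun_upd[of r' r c] that by simp
  show ?thesis
  proof (cases "even r")
    case True
    define m where "m = g - r div 2"
    have m: "2 * (g - m) = r" "m < g"
      using r True by (auto simp: m_def elim!: evenE)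
    have "(\<Sum>k\<in>{m+1..<g}. q_coeff g c' k * c' (2 * (k - m))) = (\<Sum>k\<in>{m+1..<g}. q_coeff g c k * c (2 * (k - m)))"
      using m by (intro sum.cong refl arg_cong2[where f = times] q_coeff_agree ag)
        (auto simp: c'_def)
    then have "p_coeff g c' m = p_coeff g c m - t"
      using m by (simp add: p_coeff_less c'_def)
    with True show ?thesis
      by (simp add: free_entry_V_of_coords free_slope_def m_def c'_def)
  next
    case False
    define m where "m = (2 * g + 1 - r) div 2"
    have m: "2 * g + 1 - 2 * m = r" "m \<le> g"
      using r False by (auto simp: m_def elim!: oddE)
    have "(\<Sum>k\<in>{m+1..g}. b_coeff g c' k * c' (2 * (k - m))) = (\<Sum>k\<in>{m+1..g}. b_coeff g c k * c (2 * (k - m)))"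
      using m by (intro sum.cong refl arg_cong2[where f = times] b_coeff_agree ag)
        (auto simp: c'_def)
    moreover have "H1_coeff g c' = H1_coeff g c + t" if "m = 0"
    proof -
      have "(\<Sum>k<g. q_coeff g c' k * c' (2 * k + 1)) = (\<Sum>k<g. q_coeff g c k * c (2 * k + 1))"
        using m that by (intro sum.cong refl arg_cong2[where f = times] q_coeff_agree ag)
          (auto simp: c'_def)
      then show ?thesis
        using m that by (simp add: H1_coeff_eq c'_def)
    qed
    ultimately have "a_coeff g c' m = a_coeff g c m + (if m = 0 then 2 else 1) * t"
      using m by (auto simp: a_coeff_def c'_def)
    moreover have "m = 0 \<longleftrightarrow> r = 2 * g + 1"
      using m by auto
    ultimately show ?thesis
      using False by (simp add: free_entry_V_of_coords free_slope_def m_def c'_def)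
  qed
qed

definition coordwise_differentiable :: "((nat \<Rightarrow> complex) \<Rightarrow> complex) \<Rightarrow> bool" where
  "coordwise_differentiable F \<longleftrightarrow> (\<forall>c k. (\<lambda>t. F (c(k := c k + t))) field_differentiable (at 0))"

lemma coordwise_differentiable_const: "coordwise_differentiable (\<lambda>c. a)"
  by (simp add: coordwise_differentiable_def)

lemma coordwise_differentiable_coord: "coordwise_differentiable (\<lambda>c. c l)"
  unfolding coordwise_differentiable_def
proof (intro allI)
  fix c k
  show "(\<lambda>t. (c(k := c k + t)) l) field_differentiable (at 0)"
    by (cases "l = k") (simp_all add: field_differentiable_add field_differentiable_ident)
qed

lemma coordwise_differentiable_if:
  "coordwise_differentiable F \<Longrightarrow> coordwise_differentiable G \<Longrightarrow>
    coordwise_differentiable (\<lambda>c. if P then F c else G c)"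
  by (cases P) simp_all

lemma coordwise_differentiable_add:
  "coordwise_differentiable F \<Longrightarrow> coordwise_differentiable G \<Longrightarrow> coordwise_differentiable (\<lambda>c. F c + G c)"
  unfolding coordwise_differentiable_def by (auto intro: field_differentiable_add)

lemma coordwise_differentiable_diff:
  "coordwise_differentiable F \<Longrightarrow> coordwise_differentiable G \<Longrightarrow> coordwise_differentiable (\<lambda>c. F c - G c)"
  unfolding coordwise_differentiable_def by (auto intro: field_differentiable_diff)

lemma coordwise_differentiable_minus:
  "coordwise_differentiable F \<Longrightarrow> coordwise_differentiable (\<lambda>c. - F c)"
  unfolding coordwise_differentiable_def by (auto intro: field_differentiable_minus)

lemma coordwise_differentiable_mult:
  "coordwise_differentiable F \<Longrightarrow> coordwise_differentiable G \<Longrightarrow> coordwise_differentiable (\<lambda>c. F c * G c)"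
  unfolding coordwise_differentiable_def by (auto intro: field_differentiable_mult)

lemma coordwise_differentiable_sum:
  "(\<And>k. k \<in> K \<Longrightarrow> coordwise_differentiable (F k)) \<Longrightarrow> coordwise_differentiable (\<lambda>c. \<Sum>k\<in>K. F k c)"
  unfolding coordwise_differentiable_def by (auto intro: field_differentiable_sum)

lemma coordwise_differentiable_back_subst:
  assumes "\<And>k. coordwise_differentiable (\<lambda>c. r c k)" "\<And>i. coordwise_differentiable (\<lambda>c. w c i)"
  shows "coordwise_differentiable (\<lambda>c. back_subst d (r c) (w c) m)"
proof (induction "d - m" arbitrary: m rule: less_induct)
  case less
  show ?case
  proof (cases "m \<le> d")
    case True
    then have "(\<lambda>c. back_subst d (r c) (w c) m) =
        (\<lambda>c. r c m - (\<Sum>k\<in>{m+1..d}. back_subst d (r c) (w c) k * w c (k - m)))"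
      by (simp add: back_subst_le)
    moreover have "coordwise_differentiable
        (\<lambda>c. r c m - (\<Sum>k\<in>{m+1..d}. back_subst d (r c) (w c) k * w c (k - m)))"
      by (intro coordwise_differentiable_diff coordwise_differentiable_sum
          coordwise_differentiable_mult assms less) auto
    ultimately show ?thesis
      by simp
  qed (simp add: back_subst_gt coordwise_differentiable_const)
qed

lemma coordwise_differentiable_V_of_coords: "coordwise_differentiable (\<lambda>c. entry (V_of_coords g c i) r s)"
proof -
  have q: "coordwise_differentiable (\<lambda>c. q_coeff g c m)" for m
    unfolding q_coeff_def
    by (intro coordwise_differentiable_back_subst coordwise_differentiable_const coordwise_differentiable_coord)
  have b: "coordwise_differentiable (\<lambda>c. b_coeff g c m)" for m
    unfolding b_coeff_def
    by (intro coordwise_differentiable_back_subst coordwise_differentiable_if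
        coordwise_differentiable_const coordwise_differentiable_coord)
  have p: "coordwise_differentiable (\<lambda>c. p_coeff g c m)" for m
    unfolding p_coeff_def
    by (intro coordwise_differentiable_minus coordwise_differentiable_sum coordwise_differentiable_mult
        coordwise_differentiable_coord q)
  have a: "coordwise_differentiable (\<lambda>c. a_coeff g c m)" for m
    unfolding a_coeff_def H1_coeff_def
    by (intro coordwise_differentiable_diff coordwise_differentiable_add coordwise_differentiable_sum
        coordwise_differentiable_mult coordwise_differentiable_if coordwise_differentiable_coord
        coordwise_differentiable_const q b)
  have "r = 1 \<or> r = 2" "s = 1 \<or> s = 2"
    using exhaust_2 by auto
  then show ?thesis
    by (auto simp: V_of_coords_def p q a b)
qed

definition partial_V :: "nat \<Rightarrow> (nat \<Rightarrow> complex) \<Rightarrow> nat \<Rightarrow> pmat" where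
  "partial_V g c k = (\<lambda>i. \<chi> r s. deriv (\<lambda>t. entry (V_of_coords g (c(k := c k + t)) i) r s) 0)"

lemma partial_V_has_field_derivative:
  "((\<lambda>t. entry (V_of_coords g (c(k := c k + t)) i) r s) has_field_derivative entry (partial_V g c k i) r s) (at 0)"
  using coordwise_differentiable_V_of_coords[of g i r s]
  by (simp add: partial_V_def coordwise_differentiable_def DERIV_deriv_iff_field_differentiable)

lemma partial_V_in_TStilde: "partial_V g c k \<in> TStilde g (V_of_coords g c)"
  using curve_velocity_in_TStilde[of "\<lambda>t. V_of_coords g (c(k := c k + t))", OF V_of_coords_in_Stilde
      partial_V_has_field_derivative]
  by simp

lemma free_entry_partial_V_has_field_derivative:
  "((\<lambda>t. free_entry g r (V_of_coords g (c(k := c k + t)))) has_field_derivative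
     free_entry g r (partial_V g c k)) (at 0)"
  unfolding free_entry_def by (cases "even r") (simp_all add: partial_V_has_field_derivative)

lemma free_entry_partial_V_upper:
  assumes "r < k" "r \<le> 2 * g + 1"
  shows "free_entry g r (partial_V g c k) = 0"
  using assms agree_upto_fun_upd[OF assms(1)]
  by (intro has_field_derivative_const_eq_0[OF _ free_entry_partial_V_has_field_derivative])
    (rule free_entry_V_of_coords_agree)

lemma free_entry_partial_V_diag:
  assumes "1 \<le> r" "r \<le> 2 * g + 1"
  shows "free_entry g r (partial_V g c r) = free_slope g r"
proof -
  have "((\<lambda>t. free_entry g r (V_of_coords g c) + free_slope g r * t) has_field_derivative
      0 + free_slope g r) (at 0)"
    by (intro DERIV_add DERIV_const DERIV_cmult_Id)
  with free_entry_partial_V_has_field_derivative[of g r c r] show ?thesis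
    by (simp add: free_entry_V_of_coords_shift[OF assms] DERIV_unique)
qed

lemma lower_triangular_solvable:
  fixes J :: "nat \<Rightarrow> nat \<Rightarrow> 'a::field"
  assumes "\<And>r k. r < k \<Longrightarrow> k \<le> N \<Longrightarrow> J r k = 0" and "\<And>r. r \<le> N \<Longrightarrow> J r r \<noteq> 0"
  shows "\<exists>a. \<forall>r\<le>N. (\<Sum>k\<le>N. a k * J r k) = f r"
  using assms
proof (induction N)
  case 0
  then show ?case
    by (intro exI[of _ "\<lambda>_. f 0 / J 0 0"]) simp
next
  case (Suc N)
  have "\<exists>a. \<forall>r\<le>N. (\<Sum>k\<le>N. a k * J r k) = f r"
    by (rule Suc.IH) (use Suc.prems in auto)
  then obtain a where a: "\<forall>r\<le>N. (\<Sum>k\<le>N. a k * J r k) = f r"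
    by blast
  define v where "v = (f (Suc N) - (\<Sum>k\<le>N. a k * J (Suc N) k)) / J (Suc N) (Suc N)"
  have "(\<Sum>k\<le>Suc N. (a(Suc N := v)) k * J r k) = (\<Sum>k\<le>N. a k * J r k) + v * J r (Suc N)" for r
    by simp
  then have "\<forall>r\<le>Suc N. (\<Sum>k\<le>Suc N. (a(Suc N := v)) k * J r k) = f r"
    using a Suc.prems by (auto simp: v_def le_Suc_eq)
  then show ?case
    by blast
qed

lemma free_entry_Efield_V_of_coords: "free_entry g 0 (Efield (V_of_coords g c)) = -1"
  by (simp add: free_entry_def Efield_entry V_of_coords_def q_coeff_top)

text \<open>In the free entries \<open>r = 0, ..., 2g + 1\<close> the matrix of \<open>E, \<partial>V/\<partial>h_1, ..., \<partial>V/\<partial>h_(2g+1)\<close>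
  is lower triangular with nonzero diagonal, so these vectors form a basis of the tangent space.\<close>
lemma TStilde_V_of_coords:
  fixes g :: nat and c :: "nat \<Rightarrow> complex"
  defines "X \<equiv> V_of_coords g c"
    and "W \<equiv> \<lambda>k. if k = 0 then Efield (V_of_coords g c) else partial_V g c k"
  shows "TStilde g X = {(\<lambda>i. \<Sum>k\<le>2 * g + 1. msc (a k) (W k i)) | a. True}"
proof
  have X: "X \<in> MA g"
    using V_of_coords_in_Stilde by (simp add: X_def Stilde_def)
  have W: "W k \<in> TStilde g X" for k
    using Efield_in_TStilde[OF X] partial_V_in_TStilde by (simp add: W_def X_def)
  have lincomb: "(\<lambda>i. \<Sum>k\<le>2 * g + 1. msc (a k) (W k i)) \<in> TStilde g X" for a
    by (rule TStilde_lincomb) (rule W)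
  then show "{(\<lambda>i. \<Sum>k\<le>2 * g + 1. msc (a k) (W k i)) | a. True} \<subseteq> TStilde g X"
    by blast
  show "TStilde g X \<subseteq> {(\<lambda>i. \<Sum>k\<le>2 * g + 1. msc (a k) (W k i)) | a. True}"
  proof
    fix Y assume Y: "Y \<in> TStilde g X"
    have "\<exists>a. \<forall>r\<le>2 * g + 1. (\<Sum>k\<le>2 * g + 1. a k * free_entry g r (W k)) = free_entry g r Y"
    proof (rule lower_triangular_solvable)
      show "free_entry g r (W k) = 0" if "r < k" "k \<le> 2 * g + 1" for r k
        using that by (simp add: W_def free_entry_partial_V_upper)
      show "free_entry g r (W r) \<noteq> 0" if "r \<le> 2 * g + 1" for r
        using that by (cases "r = 0")
          (simp_all add: W_def X_def free_entry_Efield_V_of_coords free_entry_partial_V_diag free_slope_def)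
    qed
    then obtain a where a: "\<And>r. r \<le> 2 * g + 1 \<Longrightarrow>
        free_entry g r (\<lambda>i. \<Sum>k\<le>2 * g + 1. msc (a k) (W k i)) = free_entry g r Y"
      unfolding free_entry_lincomb by blast
    have "Y = (\<lambda>i. \<Sum>k\<le>2 * g + 1. msc (a k) (W k i))"
      using a by (intro TStilde_eqI[OF X Y lincomb]) simp
    then show "Y \<in> {(\<lambda>i. \<Sum>k\<le>2 * g + 1. msc (a k) (W k i)) | a. True}"
      by blast
  qed
qed

lemma V_of_coords_transversal:
  fixes g :: nat and c :: "nat \<Rightarrow> complex"
  defines "X \<equiv> V_of_coords g c"
    and "TQ \<equiv> {(\<lambda>i. \<Sum>k\<in>{1..2*g+1}. msc (a k) (partial_V g c k i)) | a. True}"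
  shows "TStilde g X = {(\<lambda>i. u i + msc s (Efield X i)) | u s. u \<in> TQ}"
    and "Efield X \<noteq> (\<lambda>i. 0)"
    and "(\<lambda>i. msc s (Efield X i)) \<in> TQ \<Longrightarrow> s = 0"
proof -
  define W where "W = (\<lambda>k. if k = 0 then Efield (V_of_coords g c) else partial_V g c k)"
  have split: "(\<Sum>k\<le>2 * g + 1. msc (a k) (W k i)) =
      (\<Sum>k\<in>{1..2*g+1}. msc (a k) (partial_V g c k i)) + msc (a 0) (Efield X i)" for a i
  proof -
    have "{..2 * g + 1} = insert 0 {1..2 * g + 1}"
      by auto
    then show ?thesis
      by (simp add: W_def X_def add.commute)
  qed
  show "TStilde g X = {(\<lambda>i. u i + msc s (Efield X i)) | u s. u \<in> TQ}"
  proof -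
    have "{(\<lambda>i. \<Sum>k\<le>2 * g + 1. msc (a k) (W k i)) | a. True} =
        {(\<lambda>i. u i + msc s (Efield X i)) | u s. u \<in> TQ}"
    proof (intro equalityI subsetI)
      fix Y assume "Y \<in> {(\<lambda>i. u i + msc s (Efield X i)) | u s. u \<in> TQ}"
      then obtain a s where Y: "Y = (\<lambda>i. (\<Sum>k\<in>{1..2*g+1}. msc (a k) (partial_V g c k i)) + msc s (Efield X i))"
        unfolding TQ_def by blast
      have "(\<Sum>k\<in>{1..2*g+1}. msc ((a(0 := s)) k) (partial_V g c k i)) = (\<Sum>k\<in>{1..2*g+1}. msc (a k) (partial_V g c k i))"
        for i by (rule sum.cong) auto
      then have "Y = (\<lambda>i. \<Sum>k\<le>2 * g + 1. msc ((a(0 := s)) k) (W k i))"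
        unfolding split by (simp add: Y)
      then show "Y \<in> {(\<lambda>i. \<Sum>k\<le>2 * g + 1. msc (a k) (W k i)) | a. True}"
        by blast
    next
      fix Y assume "Y \<in> {(\<lambda>i. \<Sum>k\<le>2 * g + 1. msc (a k) (W k i)) | a. True}"
      then obtain a where "Y = (\<lambda>i. \<Sum>k\<le>2 * g + 1. msc (a k) (W k i))"
        by blast
      moreover define u where "u = (\<lambda>i. \<Sum>k\<in>{1..2*g+1}. msc (a k) (partial_V g c k i))"
      ultimately have "Y = (\<lambda>i. u i + msc (a 0) (Efield X i))" and "u \<in> TQ"
        unfolding split TQ_def by auto
      then show "Y \<in> {(\<lambda>i. u i + msc s (Efield X i)) | u s. u \<in> TQ}"
        by blast
    qed
    then show ?thesis
      using TStilde_V_of_coords[of g c] by (simp add: X_def W_def)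
  qed
  have E: "free_entry g 0 (Efield X) = -1"
    by (simp add: X_def free_entry_Efield_V_of_coords)
  then show "Efield X \<noteq> (\<lambda>i. 0)"
    by (auto simp: free_entry_def)
  assume "(\<lambda>i. msc s (Efield X i)) \<in> TQ"
  then obtain a where "(\<lambda>i. msc s (Efield X i)) = (\<lambda>i. \<Sum>k\<in>{1..2*g+1}. msc (a k) (partial_V g c k i))"
    unfolding TQ_def by blast
  then have "free_entry g 0 (\<lambda>i. msc s (Efield X i)) = (\<Sum>k\<in>{1..2*g+1}. a k * free_entry g 0 (partial_V g c k))"
    by (simp only: free_entry_lincomb)
  then show "s = 0"
    by (simp add: free_entry_msc E free_entry_partial_V_upper)
qed

theorem mainTheorem4:
  fixes g :: nat
  assumes "g \<ge> 1"
  shows "\<forall>h\<in>Mkdv g.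
    (let c = (\<lambda>l. fls_nth h (int l)); X = Vcoord g c in
      X \<in> Stilde g \<and>
      (\<exists>D :: nat \<Rightarrow> pmat.
         (\<forall>k\<in>{1..2*g+1}. \<forall>i r s.
            ((\<lambda>t. Vcoord g (c(k := c k + t)) i $ r $ s) has_field_derivative (D k i $ r $ s)) (at 0)) \<and>
         (let TQ = {(\<lambda>i. \<Sum>k\<in>{1..2*g+1}. msc (a k) (D k i)) | a. True} in
            TStilde g X = {(\<lambda>i. u i + msc s (Efield X i)) | u s. u \<in> TQ} \<and>
            Efield X \<noteq> (\<lambda>i. 0) \<and>
            (\<forall>s. (\<lambda>i. msc s (Efield X i)) \<in> TQ \<longrightarrow> s = 0))))"
  unfolding Let_def Vcoord_eq_V_of_coords
  using V_of_coords_in_Stilde V_of_coords_transversal partial_V_has_field_derivative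
  by (intro ballI conjI exI[of _ "partial_V g _"] allI impI) fast+

end
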